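(* Let $N\ge2$, $m=[N/2]$, $\lambda=(\lambda_1,\dots,\lambda_N)\in\mathbb{C}^N$ and $\kappa=(\kappa_1,\dots,\kappa_m)\in(0,\infty)^m$. For $j=1,\dots,m$ let $\alpha_j=e_{2j-1}-e_{2j}$ and let $\tau_j$ be the orthogonal projection onto $\alpha_j^\perp$, i.e. $\tau_jx$ is obtained from $x$ by replacing both $x_{2j-1}$ and $x_{2j}$ by $\frac12(x_{2j-1}+x_{2j})$. For $\xi\in\mathbb{R}^N$ define $$(T_\xi f)(x)=\partial_\xi f(x)+\sum_{j=1}^m\kappa_j\langle\alpha_j,\xi\rangle\frac{f(x)-f(\tau_jx)}{x_{2j-1}-x_{2j}},$$ extended complex-linearly to $\xi\in\mathbb{C}^N$. Let $h(0,x)=x-\sum_{j=1}^m\frac{x_{2j-1}-x_{2j}}{2}(e_{2j-1}-e_{2j})$. Then the problem $$T_\xi f=i\langle\lambda,\xi\rangle f\ \ \text{for all }\xi\in\mathbb{C}^N,\qquad f(0)=1,$$ has a unique analytic solution, given by $$M_\kappa(\lambda,x)=e^{i\langle\lambda,h(0,x)\rangle}\prod_{j=1}^m M_{\kappa_j}\Big(\frac{i}{2}(\lambda_{2j-1}-\lambda_{2j})(x_{2j-1}-x_{2j})\Big),$$ where $M_{\kappa_j}(z)=M(1,\kappa_j+1;z)=\sum_{n\ge0}\frac{z^n}{(\kappa_j+1)_n}$.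
   Context: $e_1,\dots,e_N$ is the standard basis of $\mathbb{R}^N$, $\langle\cdot,\cdot\rangle$ the (bilinear) standard pairing, $\partial_\xi$ the directional derivative, $[N/2]$ the integer part, $(a)_n=\Gamma(a+n)/\Gamma(a)$. For analytic $f$ the difference quotients are understood as their analytic extensions across $x_{2j-1}=x_{2j}$. The vectors $\alpha_j$ form a positive orthogonal subsystem of the root system $A_{N-1}=\{\pm(e_i-e_j):1\le i<j\le N\}$. *)

theory Defs
  imports "HOL-Analysis.Analysis"
begin

text \<open>Coordinates of R^N are indexed by a finite type 'n, enumerated by a bijection
  ix from {0..<N} (0-based), so e_k (1-based) corresponds to index ix (k-1).
  The pair alpha_j = e_{2j-1} - e_{2j} (j = 1..m) becomes, 0-based with j < m,
  the coordinates ix (2*j) and ix (2*j+1).\<close>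

definition real_analytic :: "(real ^ 'n \<Rightarrow> complex) \<Rightarrow> bool" where
  "real_analytic f \<longleftrightarrow> (\<forall>a. \<exists>r>0. \<exists>c :: ('n \<Rightarrow> nat) \<Rightarrow> complex.
      \<forall>x. dist x a < r \<longrightarrow>
        ((\<lambda>\<alpha>. c \<alpha> * (\<Prod>i\<in>UNIV. complex_of_real (x $ i - a $ i) ^ \<alpha> i)) has_sum f x) UNIV)"

definition dir_deriv :: "(real ^ 'n \<Rightarrow> complex) \<Rightarrow> real ^ 'n \<Rightarrow> real ^ 'n \<Rightarrow> complex" where
  "dir_deriv f \<xi> x = frechet_derivative f (at x) \<xi>"

definition tau_pair :: "'n \<Rightarrow> 'n \<Rightarrow> real ^ 'n \<Rightarrow> real ^ 'n" where
  "tau_pair a b x = (\<chi> i. if i = a \<or> i = b then (x $ a + x $ b) / 2 else x $ i)"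

text \<open>The difference quotient (f x - f (tau x)) / (x_a - x_b), extended continuously
  (= analytically, for analytic f) across the hyperplane x_a = x_b.\<close>
definition diff_quot :: "(real ^ 'n \<Rightarrow> complex) \<Rightarrow> 'n \<Rightarrow> 'n \<Rightarrow> real ^ 'n \<Rightarrow> complex" where
  "diff_quot f a b x =
     (let q = (\<lambda>y. (f y - f (tau_pair a b y)) / complex_of_real (y $ a - y $ b))
      in if x $ a \<noteq> x $ b then q x else Lim (at x within {y. y $ a \<noteq> y $ b}) q)"

definition T_real :: "(nat \<Rightarrow> 'n) \<Rightarrow> (nat \<Rightarrow> real) \<Rightarrow> (real ^ 'n \<Rightarrow> complex)
    \<Rightarrow> real ^ 'n \<Rightarrow> real ^ 'n \<Rightarrow> complex" where
  "T_real ix \<kappa> f \<xi> x =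
     dir_deriv f \<xi> x +
     (\<Sum>j<CARD('n) div 2. complex_of_real (\<kappa> j * (\<xi> $ ix (2*j) - \<xi> $ ix (2*j+1)))
        * diff_quot f (ix (2*j)) (ix (2*j+1)) x)"

definition T_op :: "(nat \<Rightarrow> 'n) \<Rightarrow> (nat \<Rightarrow> real) \<Rightarrow> (real ^ 'n \<Rightarrow> complex)
    \<Rightarrow> complex ^ 'n \<Rightarrow> real ^ 'n \<Rightarrow> complex" where
  "T_op ix \<kappa> f \<zeta> x =
     T_real ix \<kappa> f (\<chi> i. Re (\<zeta> $ i)) x + \<i> * T_real ix \<kappa> f (\<chi> i. Im (\<zeta> $ i)) x"

definition pairing :: "complex ^ 'n \<Rightarrow> complex ^ 'n \<Rightarrow> complex" where
  "pairing u v = (\<Sum>i\<in>UNIV. u $ i * v $ i)"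

definition h0 :: "(nat \<Rightarrow> 'n) \<Rightarrow> real ^ 'n \<Rightarrow> real ^ 'n" where
  "h0 ix x = x - (\<Sum>j<CARD('n) div 2.
      ((x $ ix (2*j) - x $ ix (2*j+1)) / 2) *\<^sub>R (axis (ix (2*j)) 1 - axis (ix (2*j+1)) 1))"

definition M1 :: "real \<Rightarrow> complex \<Rightarrow> complex" where
  "M1 k z = (\<Sum>n. z ^ n / pochhammer (complex_of_real (k + 1)) n)"

definition M_kernel :: "(nat \<Rightarrow> 'n) \<Rightarrow> (nat \<Rightarrow> real) \<Rightarrow> complex ^ 'n \<Rightarrow> real ^ 'n \<Rightarrow> complex" where
  "M_kernel ix \<kappa> lam x =
     exp (\<i> * pairing lam (\<chi> i. complex_of_real (h0 ix x $ i))) *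
     (\<Prod>j<CARD('n) div 2.
        M1 (\<kappa> j) (\<i> / 2 * (lam $ ix (2*j) - lam $ ix (2*j+1))
                      * complex_of_real (x $ ix (2*j) - x $ ix (2*j+1))))"

end

theory Submission
  imports Defs "HOL-Complex_Analysis.Complex_Analysis"
begin

text \<open>In a direction v orthogonal to every root alpha_j the difference terms of T_v vanish,
  so an eigenfunction satisfies f (p + v) = exp (i <lambda, v>) f p; this reduces f x to
  exp (i <lambda, h(0,x)>) times f at x - h(0,x), a point in the span of the roots. Moving
  along one root at a time, the eigen-equation becomes the singular scalar ODE
  q' = a q - k (q t - q 0) / t, whose solutions continuous at 0 are exactly
  q 0 * M(1, k+1; a t): multiplying the difference of two solutions by t^k e^{-a t} gives a
  constant that tends to 0 at t = 0. Conversely, M(1, k+1; z) = 1 + z H(z) with M' + k H = M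
  makes the product formula an analytic solution.\<close>

section \<open>The confluent hypergeometric function M(1, k+1; z)\<close>

definition M1_coeff :: "real \<Rightarrow> nat \<Rightarrow> complex" where
  "M1_coeff k n = 1 / pochhammer (complex_of_real (k + 1)) n"

definition M1_tail :: "real \<Rightarrow> complex \<Rightarrow> complex" where
  "M1_tail k z = (\<Sum>n. M1_coeff k (Suc n) * z ^ n)"

definition M1_deriv :: "real \<Rightarrow> complex \<Rightarrow> complex" where
  "M1_deriv k z = (\<Sum>n. diffs (M1_coeff k) n * z ^ n)"

lemma M1_power_series: "M1 k z = (\<Sum>n. M1_coeff k n * z ^ n)"
  unfolding M1_def M1_coeff_def by (simp add: divide_inverse mult.commute)

lemma fact_le_pochhammer: "(x::real) \<ge> 1 \<Longrightarrow> fact n \<le> pochhammer x n"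
proof (induction n)
  case 0 then show ?case by simp
next
  case (Suc n)
  have "fact (Suc n) = fact n * (1 + real n)" by (simp add: algebra_simps)
  also have "\<dots> \<le> pochhammer x n * (x + real n)"
  proof (rule mult_mono)
    show "0 \<le> pochhammer x n" using Suc by (metis fact_ge_zero order_trans)
  qed (use Suc in auto)
  finally show ?case by (simp add: pochhammer_Suc)
qed

lemma norm_M1_coeff_le: "k \<ge> 0 \<Longrightarrow> norm (M1_coeff k n) \<le> 1 / fact n"
proof -
  assume k: "k \<ge> 0"
  have p: "fact n \<le> pochhammer (k+1) n" using k by (intro fact_le_pochhammer) auto
  have pos: "0 < (fact n :: real)" by simp
  have pp: "0 < pochhammer (k+1) n" using p pos by linarith
  have e: "M1_coeff k n = complex_of_real (1 / pochhammer (k+1) n)"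
    unfolding M1_coeff_def
    by (simp only: pochhammer_of_real[symmetric] of_real_divide of_real_1 of_real_add)
  have "norm (M1_coeff k n) = 1 / pochhammer (k+1) n"
    unfolding e norm_of_real using pp by simp
  also have "\<dots> \<le> 1 / fact n" using p pos pp by (intro frac_le) auto
  finally show ?thesis .
qed

lemma summable_norm_power_series_if_coeff_le_inverse_fact:
  fixes c :: "nat \<Rightarrow> complex"
  assumes "\<And>n. norm (c n) \<le> 1 / fact n"
  shows "summable (\<lambda>n. norm (c n * z ^ n))"
proof (rule summable_comparison_test'[OF summable_exp[of "norm z"]])
  fix n :: nat
  have "norm (c n * z ^ n) = norm (c n) * norm z ^ n" by (simp add: norm_mult norm_power)
  also have "\<dots> \<le> 1 / fact n * norm z ^ n" using assms by (intro mult_right_mono) auto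
  finally show "norm (norm (c n * z ^ n)) \<le> inverse (fact n) * norm z ^ n"
    by (simp add: divide_inverse)
qed

lemma summable_M1_series: "k \<ge> 0 \<Longrightarrow> summable (\<lambda>n. M1_coeff k n * z ^ n)"
  by (rule summable_norm_cancel, rule summable_norm_power_series_if_coeff_le_inverse_fact,
      rule norm_M1_coeff_le)

lemma summable_M1_tail_series: "k \<ge> 0 \<Longrightarrow> summable (\<lambda>n. M1_coeff k (Suc n) * z ^ n)"
proof (rule summable_norm_cancel, rule summable_norm_power_series_if_coeff_le_inverse_fact)
  fix n assume "k \<ge> 0"
  then have "norm (M1_coeff k (Suc n)) \<le> 1 / fact (Suc n)" by (rule norm_M1_coeff_le)
  also have "\<dots> \<le> 1 / fact n" by (intro divide_left_mono) (auto simp: fact_mono)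
  finally show "norm (M1_coeff k (Suc n)) \<le> 1 / fact n" .
qed

lemma M1_0 [simp]: "M1 k 0 = 1"
  unfolding M1_power_series by (subst suminf_finite[of "{0}"]) (auto simp: M1_coeff_def)

lemma M1_minus_1: "k \<ge> 0 \<Longrightarrow> M1 k z - 1 = z * M1_tail k z"
proof -
  assume k: "k \<ge> 0"
  have "(\<Sum>n. M1_coeff k (Suc n) * z ^ Suc n) = M1 k z - M1_coeff k 0 * z ^ 0"
    unfolding M1_power_series by (rule suminf_split_head[OF summable_M1_series[OF k]])
  moreover have "(\<Sum>n. M1_coeff k (Suc n) * z ^ Suc n) = z * M1_tail k z"
    unfolding M1_tail_def using suminf_mult[OF summable_M1_tail_series[OF k], of z]
    by (simp add: algebra_simps)
  ultimately show ?thesis by (simp add: M1_coeff_def)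
qed

lemma has_field_derivative_M1: "k \<ge> 0 \<Longrightarrow> (M1 k has_field_derivative M1_deriv k z) (at z)"
  unfolding M1_deriv_def M1_power_series[abs_def]
  by (rule termdiffs_strong_converges_everywhere, rule summable_M1_series)

lemma holomorphic_M1: "k \<ge> 0 \<Longrightarrow> M1 k holomorphic_on UNIV"
  unfolding holomorphic_on_def field_differentiable_def using has_field_derivative_M1
  by (blast intro: has_field_derivative_at_within)

lemma isCont_M1_tail: "k \<ge> 0 \<Longrightarrow> isCont (M1_tail k) z"
  unfolding M1_tail_def[abs_def]
  by (rule DERIV_isCont, rule termdiffs_strong_converges_everywhere, rule summable_M1_tail_series)

text \<open>Coefficientwise this is the recursion (k+1)_{n+1} = (k+1)_n (k+1+n).\<close>
lemma M1_deriv_plus_tail: "k \<ge> 0 \<Longrightarrow> M1_deriv k z + complex_of_real k * M1_tail k z = M1 k z"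
proof -
  assume k: "k \<ge> 0"
  have s1: "summable (\<lambda>n. diffs (M1_coeff k) n * z ^ n)"
    by (rule termdiff_converges_all, rule summable_M1_series[OF k])
  have s2: "summable (\<lambda>n. complex_of_real k * (M1_coeff k (Suc n) * z ^ n))"
    by (rule summable_mult, rule summable_M1_tail_series[OF k])
  have coeff: "diffs (M1_coeff k) n + complex_of_real k * M1_coeff k (Suc n) = M1_coeff k n" for n
  proof -
    have nz: "complex_of_real (k + 1) + of_nat n \<noteq> 0"
    proof
      assume "complex_of_real (k + 1) + of_nat n = 0"
      then have "Re (complex_of_real (k + 1) + of_nat n) = 0" by simp
      with k show False by simp
    qed
    have "M1_coeff k (Suc n) = M1_coeff k n / (complex_of_real (k + 1) + of_nat n)"
      unfolding M1_coeff_def by (simp add: pochhammer_Suc)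
    then show ?thesis unfolding diffs_def using nz by (simp add: field_simps)
  qed
  have "M1_deriv k z + complex_of_real k * M1_tail k z
      = (\<Sum>n. diffs (M1_coeff k) n * z ^ n + complex_of_real k * (M1_coeff k (Suc n) * z ^ n))"
    unfolding M1_deriv_def M1_tail_def
    by (simp add: suminf_add[OF s1 s2, symmetric] suminf_mult[OF summable_M1_tail_series[OF k]])
  also have "\<dots> = (\<Sum>n. M1_coeff k n * z ^ n)"
  proof (rule suminf_cong)
    fix n
    have "diffs (M1_coeff k) n * z ^ n + complex_of_real k * (M1_coeff k (Suc n) * z ^ n)
        = (diffs (M1_coeff k) n + complex_of_real k * M1_coeff k (Suc n)) * z ^ n"
      by (simp add: algebra_simps)
    then show "diffs (M1_coeff k) n * z ^ n + complex_of_real k * (M1_coeff k (Suc n) * z ^ n)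
        = M1_coeff k n * z ^ n"
      by (simp only: coeff)
  qed
  finally show ?thesis unfolding M1_power_series .
qed

lemma has_vector_derivative_M1_scaled:
  assumes k: "k \<ge> 0"
  shows "((\<lambda>t. M1 k (a * complex_of_real t)) has_vector_derivative
           (a * M1_deriv k (a * complex_of_real t))) (at t within S)"
proof -
  have "((\<lambda>z. M1 k (a * z)) has_field_derivative (M1_deriv k (a * of_real t) * a)) (at (of_real t))"
    by (rule DERIV_chain2[OF has_field_derivative_M1[OF k]]) (auto intro!: derivative_eq_intros)
  from has_vector_derivative_real_field[OF this] show ?thesis by (simp add: mult.commute)
qed

lemma M1_scaled_singular_ode:
  assumes k: "k \<ge> 0" and t: "t \<noteq> 0"
  shows "a * M1_deriv k (a * complex_of_real t) =
     a * M1 k (a * complex_of_real t)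
       - complex_of_real k * (M1 k (a * complex_of_real t) - 1) / complex_of_real t"
proof -
  let ?z = "a * complex_of_real t"
  have deriv: "M1_deriv k ?z = M1 k ?z - complex_of_real k * M1_tail k ?z"
    using M1_deriv_plus_tail[OF k, of ?z] by (simp add: algebra_simps)
  show ?thesis unfolding deriv M1_minus_1[OF k] using t by (simp add: field_simps)
qed

section \<open>A singular first-order ODE\<close>

text \<open>Integrating factor: (t^k e^{-a t} p)' = 0, and t^k p t tends to 0 at 0.\<close>
lemma singular_ode_vanishing:
  fixes p :: "real \<Rightarrow> complex"
  assumes k: "k > 0"
    and lim: "(p \<longlongrightarrow> 0) (at_right 0)"
    and der: "\<And>t. t > 0 \<Longrightarrow>
       (p has_vector_derivative (a * p t - complex_of_real k * p t / complex_of_real t)) (at t)"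
    and t: "t > 0"
  shows "p t = 0"
proof -
  define \<psi> where "\<psi> t = p t * complex_of_real (t powr k) * exp (- (a * complex_of_real t))" for t
  have \<psi>_deriv: "(\<psi> has_derivative (\<lambda>h. 0)) (at s within {0<..})" if s: "s > 0" for s
  proof -
    have d1: "((\<lambda>t. complex_of_real (t powr k)) has_vector_derivative
                complex_of_real (k * s powr (k - 1))) (at s)"
      by (rule has_vector_derivative_of_real, rule has_real_derivative_powr[OF s])
    have "((\<lambda>z. exp (- (a * z))) has_field_derivative (exp (- (a * of_real s)) * (- a))) (at (of_real s))"
      by (auto intro!: derivative_eq_intros)
    from has_vector_derivative_real_field[OF this]
    have d2: "((\<lambda>t. exp (- (a * complex_of_real t))) has_vector_derivative
                (exp (- (a * of_real s)) * (- a))) (at s)" .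
    have powr_pred: "s powr (k - 1) = s powr k / s" using s by (simp add: powr_diff)
    have "(\<psi> has_vector_derivative
       ((p s * complex_of_real (s powr k)) * (exp (- (a * of_real s)) * (- a)) +
        (p s * complex_of_real (k * s powr (k - 1))
          + (a * p s - complex_of_real k * p s / complex_of_real s) * complex_of_real (s powr k))
        * exp (- (a * complex_of_real s)))) (at s)"
      unfolding \<psi>_def by (intro has_vector_derivative_mult der[OF s] d1 d2)
    moreover have "(p s * complex_of_real (s powr k)) * (exp (- (a * of_real s)) * (- a)) +
        (p s * complex_of_real (k * s powr (k - 1))
          + (a * p s - complex_of_real k * p s / complex_of_real s) * complex_of_real (s powr k))
        * exp (- (a * complex_of_real s)) = 0"
      unfolding powr_pred using s by (simp add: field_simps)
    ultimately have "(\<psi> has_vector_derivative 0) (at s)" by simp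
    then show ?thesis unfolding has_vector_derivative_def
      by (auto intro: has_derivative_at_withinI)
  qed
  obtain c where c: "\<And>s. s \<in> {0<..} \<Longrightarrow> \<psi> s = c"
    using has_derivative_zero_constant[of "{0::real<..}" \<psi>] \<psi>_deriv
    by (auto simp: convex_real_interval)
  have "(\<psi> \<longlongrightarrow> 0 * complex_of_real 0 * exp (- (a * complex_of_real 0))) (at_right 0)"
    unfolding \<psi>_def
  proof (intro tendsto_intros lim)
    show "((\<lambda>x. x powr k) \<longlongrightarrow> 0) (at_right 0)"
      by (rule tendsto_zero_powrI)
         (auto intro: tendsto_intros k simp: eventually_at_right_less eventually_at_filter)
  qed
  moreover have "(\<psi> \<longlongrightarrow> c) (at_right 0)"
    by (rule tendsto_eventually)
       (use c eventually_at_right_less[of 0] in \<open>auto elim: eventually_mono\<close>)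
  ultimately have "c = 0" using tendsto_unique[of "at_right (0::real)"] by simp
  then have "\<psi> t = 0" using c t by simp
  then show ?thesis using t unfolding \<psi>_def by simp
qed

lemma singular_ode_solution_pos:
  fixes q :: "real \<Rightarrow> complex"
  assumes k: "k > 0"
    and cont: "isCont q 0"
    and der: "\<And>t. t > 0 \<Longrightarrow> (q has_vector_derivative
               (a * q t - complex_of_real k * (q t - q 0) / complex_of_real t)) (at t)"
    and t: "t > 0"
  shows "q t = q 0 * M1 k (a * complex_of_real t)"
proof -
  define p where "p t = q t - q 0 * M1 k (a * complex_of_real t)" for t
  have k0: "k \<ge> 0" using k by simp
  have "p t = 0"
  proof (rule singular_ode_vanishing[OF k _ _ t])
    have "isCont (\<lambda>t. M1 k (a * complex_of_real t)) 0"
      using has_vector_derivative_M1_scaled[OF k0, of a 0 UNIV]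
      by (auto intro: has_vector_derivative_continuous)
    then have "isCont p 0" unfolding p_def using cont by (intro continuous_intros)
    then have "(p \<longlongrightarrow> p 0) (at_right 0)"
      by (simp add: isCont_def filterlim_at_split)
    then show "(p \<longlongrightarrow> 0) (at_right 0)" by (simp add: p_def)
  next
    fix s :: real assume s: "s > 0"
    have "(p has_vector_derivative
        ((a * q s - complex_of_real k * (q s - q 0) / complex_of_real s)
          - q 0 * (a * M1_deriv k (a * complex_of_real s)))) (at s)"
      unfolding p_def by (intro derivative_intros der[OF s] has_vector_derivative_M1_scaled[OF k0])
    moreover have "(a * q s - complex_of_real k * (q s - q 0) / complex_of_real s)
          - q 0 * (a * M1_deriv k (a * complex_of_real s))
        = a * p s - complex_of_real k * p s / complex_of_real s"
      unfolding p_def using s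
      by (subst M1_scaled_singular_ode[OF k0]) (simp_all add: field_simps)
    ultimately show "(p has_vector_derivative
        (a * p s - complex_of_real k * p s / complex_of_real s)) (at s)"
      by simp
  qed
  then show ?thesis unfolding p_def by simp
qed

lemma singular_ode_solution:
  fixes q :: "real \<Rightarrow> complex"
  assumes k: "k > 0"
    and cont: "isCont q 0"
    and der: "\<And>t. t \<noteq> 0 \<Longrightarrow> (q has_vector_derivative
               (a * q t - complex_of_real k * (q t - q 0) / complex_of_real t)) (at t)"
  shows "q t = q 0 * M1 k (a * complex_of_real t)"
proof -
  consider "t > 0" | "t = 0" | "t < 0" by linarith
  then show ?thesis
  proof cases
    case 1 then show ?thesis by (intro singular_ode_solution_pos[OF k cont der]) auto
  next
    case 2 then show ?thesis by simp
  next
    case 3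
    define r where "r s = q (- s)" for s
    have "r (- t) = r 0 * M1 k ((- a) * complex_of_real (- t))"
    proof (rule singular_ode_solution_pos[OF k])
      show "isCont r 0" unfolding r_def
        by (rule isCont_o2[where f=uminus]) (use cont in \<open>auto intro: continuous_intros\<close>)
    next
      show "- t > 0" using 3 by simp
    next
      fix s :: real assume s: "s > 0"
      have u: "(uminus has_vector_derivative (-1)) (at s)"
        using has_real_derivative_iff_has_vector_derivative[THEN iffD1,
                OF DERIV_minus[OF DERIV_ident, of s UNIV]]
        by (simp add: fun_eq_iff)
      have "((\<lambda>s. q (- s)) has_vector_derivative
               - (a * q (- s) - complex_of_real k * (q (- s) - q 0) / complex_of_real (- s))) (at s)"
        using vector_diff_chain_at[of uminus "-1" s q, OF u der[of "- s"]] s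
        by (simp add: o_def)
      moreover have "- (a * q (- s) - complex_of_real k * (q (- s) - q 0) / complex_of_real (- s))
          = (- a) * r s - complex_of_real k * (r s - r 0) / complex_of_real s"
        unfolding r_def by (simp add: field_simps)
      ultimately show "(r has_vector_derivative
          ((- a) * r s - complex_of_real k * (r s - r 0) / complex_of_real s)) (at s)"
        unfolding r_def by simp
    qed
    then show ?thesis unfolding r_def by simp
  qed
qed

section \<open>Real-analytic functions on R^n\<close>

definition vec_monomial :: "real ^ 'n \<Rightarrow> ('n::finite \<Rightarrow> nat) \<Rightarrow> complex" where
  "vec_monomial y \<alpha> = (\<Prod>i\<in>UNIV. complex_of_real (y $ i) ^ \<alpha> i)"

abbreviation total_deg :: "('n::finite \<Rightarrow> nat) \<Rightarrow> nat" where
  "total_deg \<alpha> \<equiv> sum \<alpha> UNIV"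

definition unit_index :: "'n \<Rightarrow> 'n \<Rightarrow> nat" where
  "unit_index i = (\<lambda>j. if j = i then 1 else 0)"

lemma real_analytic_vec_monomial_expansion:
  assumes "real_analytic f"
  obtains r c where "r > 0"
    and "\<And>h. norm h < r \<Longrightarrow> ((\<lambda>\<alpha>. c \<alpha> * vec_monomial h \<alpha>) has_sum f (a + h)) UNIV"
proof -
  obtain r c where "r > 0" and series: "\<And>x. dist x a < r \<Longrightarrow>
      ((\<lambda>\<alpha>. c \<alpha> * (\<Prod>i\<in>UNIV. complex_of_real (x $ i - a $ i) ^ \<alpha> i)) has_sum f x) UNIV"
    using assms unfolding real_analytic_def by blast
  moreover have "((\<lambda>\<alpha>. c \<alpha> * vec_monomial h \<alpha>) has_sum f (a + h)) UNIV" if "norm h < r" for h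
    using series[of "a + h"] that by (simp add: vec_monomial_def dist_norm)
  ultimately show ?thesis using that by blast
qed

lemma norm_vec_monomial_le: "norm (vec_monomial y \<alpha>) \<le> norm y ^ total_deg \<alpha>"
proof -
  have "norm (vec_monomial y \<alpha>) = (\<Prod>i\<in>UNIV. \<bar>y $ i\<bar> ^ \<alpha> i)"
    unfolding vec_monomial_def by (simp add: prod_norm[symmetric] norm_power)
  also have "\<dots> \<le> (\<Prod>i\<in>UNIV. norm y ^ \<alpha> i)"
    by (intro prod_mono conjI power_mono component_le_norm_cart) auto
  also have "\<dots> = norm y ^ total_deg \<alpha>" by (simp add: power_sum)
  finally show ?thesis .
qed

lemma vec_monomial_const: "vec_monomial (\<chi> i. s) \<alpha> = complex_of_real s ^ total_deg \<alpha>"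
  unfolding vec_monomial_def by (simp add: power_sum)

lemma vec_monomial_zero_index [simp]: "vec_monomial y (\<lambda>_. 0) = 1"
  unfolding vec_monomial_def by simp

lemma vec_monomial_unit_index [simp]: "vec_monomial y (unit_index i) = complex_of_real (y $ i)"
  unfolding vec_monomial_def unit_index_def by (simp add: if_distrib prod.If_cases)

lemma total_deg_unit_index [simp]: "total_deg (unit_index (i::'n::finite)) = 1"
  unfolding unit_index_def by simp

lemma inj_unit_index: "inj unit_index"
  unfolding inj_def unit_index_def by (metis zero_neq_one)

lemma total_deg_eq_1_imp_unit_index:
  assumes d: "total_deg (\<alpha>::'n::finite \<Rightarrow> nat) = 1"
  shows "\<exists>i. \<alpha> = unit_index i"
proof -
  obtain i where i: "\<alpha> i \<noteq> 0"
    using d by (metis sum.neutral zero_neq_one)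
  have "\<alpha> i \<le> total_deg \<alpha>" by (rule member_le_sum) auto
  with i d have ai: "\<alpha> i = 1" by simp
  have "\<alpha> j = 0" if "j \<noteq> i" for j
  proof -
    have "sum \<alpha> {i, j} \<le> total_deg \<alpha>" by (rule sum_mono2) auto
    with that ai d show ?thesis by simp
  qed
  with ai have "\<alpha> = unit_index i" by (auto simp: unit_index_def fun_eq_iff)
  then show ?thesis ..
qed

lemma indices_of_degree_less_2:
  "{\<alpha> :: 'n::finite \<Rightarrow> nat. total_deg \<alpha> < 2} = insert (\<lambda>_. 0) (range unit_index)"
proof (intro equalityI subsetI)
  fix \<alpha> :: "'n \<Rightarrow> nat" assume "\<alpha> \<in> {\<alpha>. total_deg \<alpha> < 2}"
  then consider "total_deg \<alpha> = 0" | "total_deg \<alpha> = 1" by fastforce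
  then show "\<alpha> \<in> insert (\<lambda>_. 0) (range unit_index)"
  proof cases
    case 1
    then have "\<alpha> = (\<lambda>_. 0)" by (auto simp: fun_eq_iff)
    then show ?thesis by simp
  next
    case 2
    then show ?thesis using total_deg_eq_1_imp_unit_index by blast
  qed
qed auto

lemma sum_indices_of_degree_less_2:
  "(\<Sum>\<alpha>\<in>{\<alpha> :: 'n::finite \<Rightarrow> nat. total_deg \<alpha> < 2}. c \<alpha> * vec_monomial y \<alpha>)
     = c (\<lambda>_. 0) + (\<Sum>i\<in>UNIV. c (unit_index i) * complex_of_real (y $ i))"
proof -
  have "(\<lambda>_. 0) \<notin> range (unit_index :: 'n \<Rightarrow> _)"
  proof
    assume "(\<lambda>_. 0) \<in> range (unit_index :: 'n \<Rightarrow> _)"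
    then obtain i :: 'n where "(\<lambda>_. 0) = unit_index i" by blast
    then have "(0::nat) = unit_index i i" by (rule fun_cong)
    then show False by (simp add: unit_index_def)
  qed
  then show ?thesis
    unfolding indices_of_degree_less_2
    by (simp add: sum.reindex[OF inj_unit_index])
qed

lemma abs_summable_coeff_scaled:
  fixes c :: "('n::finite \<Rightarrow> nat) \<Rightarrow> complex"
  assumes s: "s > 0" and summ: "(\<lambda>\<alpha>. c \<alpha> * vec_monomial (\<chi> i. s) \<alpha>) summable_on UNIV"
  shows "(\<lambda>\<alpha>. norm (c \<alpha>) * s ^ total_deg \<alpha>) summable_on A"
proof -
  have "(\<lambda>\<alpha>. norm (c \<alpha> * vec_monomial (\<chi> i. s) \<alpha>)) summable_on UNIV"
    by (rule summable_on_iff_abs_summable_on_complex[THEN iffD1, OF summ])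
  moreover have "norm (c \<alpha> * vec_monomial (\<chi> i. s) \<alpha>) = norm (c \<alpha>) * s ^ total_deg \<alpha>" for \<alpha>
    using s by (simp add: vec_monomial_const norm_mult norm_power)
  ultimately have "(\<lambda>\<alpha>. norm (c \<alpha>) * s ^ total_deg \<alpha>) summable_on UNIV" by simp
  then show ?thesis by (rule summable_on_subset_banach) auto
qed

lemma abs_summable_vec_monomial_series:
  fixes c :: "('n::finite \<Rightarrow> nat) \<Rightarrow> complex"
  assumes s: "s > 0" and summ: "(\<lambda>\<alpha>. c \<alpha> * vec_monomial (\<chi> i. s) \<alpha>) summable_on UNIV"
    and y: "norm y \<le> s"
  shows "(\<lambda>\<alpha>. norm (c \<alpha> * vec_monomial y \<alpha>)) summable_on A"
proof -
  have "(\<lambda>\<alpha>. norm (c \<alpha> * vec_monomial y \<alpha>)) summable_on UNIV"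
  proof (rule Infinite_Sum.abs_summable_on_comparison_test)
    show "(\<lambda>\<alpha>. norm (norm (c \<alpha>) * s ^ total_deg \<alpha>)) summable_on UNIV"
      using abs_summable_coeff_scaled[OF s summ] s by simp
  next
    fix \<alpha> :: "'n \<Rightarrow> nat"
    have "norm (c \<alpha> * vec_monomial y \<alpha>) \<le> norm (c \<alpha>) * norm y ^ total_deg \<alpha>"
      unfolding norm_mult by (intro mult_left_mono norm_vec_monomial_le) auto
    also have "\<dots> \<le> norm (c \<alpha>) * s ^ total_deg \<alpha>"
      using y by (intro mult_left_mono power_mono) auto
    finally show "norm (c \<alpha> * vec_monomial y \<alpha>) \<le> norm (norm (c \<alpha>) * s ^ total_deg \<alpha>)" by simp
  qed
  then show ?thesis by (rule summable_on_subset_banach) auto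
qed

text \<open>The terms of degree at least 2 are O(|y|^2), by comparison with the convergent
  series at the point (s, ..., s).\<close>
lemma norm_high_degree_part_le:
  fixes c :: "('n::finite \<Rightarrow> nat) \<Rightarrow> complex"
  assumes s: "s > 0" and summ: "(\<lambda>\<alpha>. c \<alpha> * vec_monomial (\<chi> i. s) \<alpha>) summable_on UNIV"
  obtains K where "\<And>y. norm y \<le> s \<Longrightarrow>
     norm (infsum (\<lambda>\<alpha>. c \<alpha> * vec_monomial y \<alpha>) {\<alpha>. 2 \<le> total_deg \<alpha>}) \<le> K * norm y ^ 2"
proof -
  define H where "H = {\<alpha> :: 'n \<Rightarrow> nat. 2 \<le> total_deg \<alpha>}"
  have bound: "(\<lambda>\<alpha>. norm (c \<alpha>) * s ^ total_deg \<alpha>) summable_on H"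
    by (rule abs_summable_coeff_scaled[OF s summ])
  define G where "G = infsum (\<lambda>\<alpha>. norm (c \<alpha>) * s ^ total_deg \<alpha>) H"
  have "norm (infsum (\<lambda>\<alpha>. c \<alpha> * vec_monomial y \<alpha>) H) \<le> G / s ^ 2 * norm y ^ 2"
    if y: "norm y \<le> s" for y
  proof -
    define t where "t = norm y / s"
    have t0: "0 \<le> t" and t1: "t \<le> 1" using y s by (auto simp: t_def)
    have ny: "norm y = t * s" using s by (simp add: t_def)
    have abs: "(\<lambda>\<alpha>. norm (c \<alpha> * vec_monomial y \<alpha>)) summable_on H"
      by (rule abs_summable_vec_monomial_series[OF s summ y])
    have "norm (infsum (\<lambda>\<alpha>. c \<alpha> * vec_monomial y \<alpha>) H)
        \<le> infsum (\<lambda>\<alpha>. norm (c \<alpha> * vec_monomial y \<alpha>)) H"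
      by (rule norm_infsum_bound[OF abs])
    also have "\<dots> \<le> infsum (\<lambda>\<alpha>. t ^ 2 * (norm (c \<alpha>) * s ^ total_deg \<alpha>)) H"
    proof (rule infsum_mono[OF abs summable_on_cmult_right[OF bound]])
      fix \<alpha> :: "'n \<Rightarrow> nat" assume "\<alpha> \<in> H"
      then have d: "2 \<le> total_deg \<alpha>" by (simp add: H_def)
      have "norm (c \<alpha> * vec_monomial y \<alpha>) \<le> norm (c \<alpha>) * norm y ^ total_deg \<alpha>"
        unfolding norm_mult by (intro mult_left_mono norm_vec_monomial_le) auto
      also have "\<dots> = norm (c \<alpha>) * s ^ total_deg \<alpha> * t ^ total_deg \<alpha>"
        unfolding ny by (simp add: power_mult_distrib)
      also have "\<dots> \<le> norm (c \<alpha>) * s ^ total_deg \<alpha> * t ^ 2"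
        using s t0 t1 d by (intro mult_left_mono power_decreasing) auto
      finally show "norm (c \<alpha> * vec_monomial y \<alpha>) \<le> t ^ 2 * (norm (c \<alpha>) * s ^ total_deg \<alpha>)"
        by (simp add: mult.commute)
    qed
    also have "\<dots> = t ^ 2 * G" unfolding G_def by (rule infsum_cmult_right')
    also have "\<dots> = G / s ^ 2 * norm y ^ 2" using s by (simp add: ny power_mult_distrib)
    finally show ?thesis .
  qed
  then show ?thesis using that unfolding H_def by blast
qed

lemma bounded_linear_coordinate_combination:
  "bounded_linear (\<lambda>h :: real ^ 'n::finite. \<Sum>i\<in>UNIV. c i * complex_of_real (h $ i))"
  unfolding linear_conv_bounded_linear[symmetric]
  by (rule linearI)
     (simp_all add: sum.distrib algebra_simps scaleR_conv_of_real[where 'a=complex] sum_distrib_left)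

lemma has_derivative_if_quadratic_remainder:
  fixes f :: "'a::real_normed_vector \<Rightarrow> 'b::real_normed_vector"
  assumes D: "bounded_linear D" and s: "s > 0"
    and remainder: "\<And>h. norm h \<le> s \<Longrightarrow> norm (f (a + h) - f a - D h) \<le> K * norm h ^ 2"
  shows "(f has_derivative D) (at a)"
  unfolding has_derivative_at_alt
proof (intro conjI allI impI D)
  fix e :: real assume e: "e > 0"
  define d where "d = min s (e / (\<bar>K\<bar> + 1))"
  have d: "d > 0" using s e by (simp add: d_def)
  show "\<exists>d>0. \<forall>y. norm (y - a) < d \<longrightarrow> norm (f y - f a - D (y - a)) \<le> e * norm (y - a)"
  proof (intro exI[of _ d] conjI allI impI d)
    fix y assume y: "norm (y - a) < d"
    define h where "h = y - a"
    have hs: "norm h \<le> s" using y by (simp add: h_def d_def)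
    have he: "norm h * (\<bar>K\<bar> + 1) \<le> e" using y e by (simp add: h_def d_def field_simps)
    have "norm (f y - f a - D h) \<le> K * norm h ^ 2"
      using remainder[OF hs] by (simp add: h_def)
    also have "\<dots> \<le> (\<bar>K\<bar> + 1) * norm h * norm h"
      using mult_right_mono[of K "\<bar>K\<bar>+1" "norm h * norm h"]
      by (simp add: power2_eq_square mult.assoc)
    also have "\<dots> \<le> e * norm h"
      using mult_right_mono[OF he norm_ge_zero[of h]] by (simp add: algebra_simps)
    finally show "norm (f y - f a - D (y - a)) \<le> e * norm (y - a)" by (simp add: h_def)
  qed
qed

text \<open>The derivative is read off from the terms of degree 1; the rest is O(|h|^2).\<close>
lemma real_analytic_has_derivative:
  fixes f :: "real ^ 'n::finite \<Rightarrow> complex"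
  assumes "real_analytic f"
  shows "\<exists>D. (f has_derivative D) (at a)"
proof -
  obtain r c where r: "r > 0" and series: "\<And>h. norm h < r \<Longrightarrow>
      ((\<lambda>\<alpha>. c \<alpha> * vec_monomial h \<alpha>) has_sum f (a + h)) UNIV"
    using real_analytic_vec_monomial_expansion[OF assms] by blast
  define s where "s = r / (2 * real CARD('n))"
  have s: "s > 0" using r by (simp add: s_def)
  have "norm (\<chi> i::'n. s) \<le> (\<Sum>i\<in>UNIV. \<bar>(\<chi> i::'n. s) $ i\<bar>)" by (rule norm_le_l1_cart)
  also have "\<dots> = r / 2" using r by (simp add: s_def)
  finally have ns: "norm (\<chi> i::'n. s) < r" using r by simp
  have sr: "s < r" using ns component_le_norm_cart[of "\<chi> i::'n. s" undefined] by simp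
  have summ: "(\<lambda>\<alpha>. c \<alpha> * vec_monomial (\<chi> i. s) \<alpha>) summable_on UNIV"
    using series[OF ns] by (auto simp: summable_on_def)
  obtain K where K: "\<And>y. norm y \<le> s \<Longrightarrow>
     norm (infsum (\<lambda>\<alpha>. c \<alpha> * vec_monomial y \<alpha>) {\<alpha>. 2 \<le> total_deg \<alpha>}) \<le> K * norm y ^ 2"
    using norm_high_degree_part_le[OF s summ] by blast
  define D where "D h = (\<Sum>i\<in>UNIV. c (unit_index i) * complex_of_real (h $ i))" for h :: "real ^ 'n"
  have split: "f (a + h) = c (\<lambda>_. 0) + D h
                 + infsum (\<lambda>\<alpha>. c \<alpha> * vec_monomial h \<alpha>) {\<alpha>. 2 \<le> total_deg \<alpha>}"
    if h: "norm h \<le> s" for h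
  proof -
    let ?L = "{\<alpha> :: 'n \<Rightarrow> nat. total_deg \<alpha> < 2}"
    have fin: "finite ?L" unfolding indices_of_degree_less_2 by simp
    have sH: "(\<lambda>\<alpha>. c \<alpha> * vec_monomial h \<alpha>) summable_on {\<alpha>. 2 \<le> total_deg \<alpha>}"
      by (rule abs_summable_summable[OF abs_summable_vec_monomial_series[OF s summ h]])
    have "?L \<union> {\<alpha>. 2 \<le> total_deg \<alpha>} = UNIV" by auto
    then have "f (a + h) = infsum (\<lambda>\<alpha>. c \<alpha> * vec_monomial h \<alpha>) (?L \<union> {\<alpha>. 2 \<le> total_deg \<alpha>})"
      using series[of h] h sr by (simp add: infsumI)
    also have "\<dots> = infsum (\<lambda>\<alpha>. c \<alpha> * vec_monomial h \<alpha>) ?L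
                    + infsum (\<lambda>\<alpha>. c \<alpha> * vec_monomial h \<alpha>) {\<alpha>. 2 \<le> total_deg \<alpha>}"
      by (rule infsum_Un_disjoint) (use fin sH in auto)
    also have "infsum (\<lambda>\<alpha>. c \<alpha> * vec_monomial h \<alpha>) ?L = c (\<lambda>_. 0) + D h"
      using fin by (simp add: sum_indices_of_degree_less_2 D_def)
    finally show ?thesis .
  qed
  have fa: "f a = c (\<lambda>_. 0)"
    using split[of 0] K[of 0] s by (simp add: D_def)
  have "(f has_derivative D) (at a)"
  proof (rule has_derivative_if_quadratic_remainder[OF _ s])
    show "bounded_linear D"
      unfolding D_def[abs_def] by (rule bounded_linear_coordinate_combination)
    show "norm (f (a + h) - f a - D h) \<le> K * norm h ^ 2" if "norm h \<le> s" for h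
      using split[OF that] K[OF that] fa by simp
  qed
  then show ?thesis by blast
qed

lemma has_sum_product_complex:
  fixes p q :: "'a \<Rightarrow> complex"
  assumes hp: "(p has_sum P) UNIV" and hq: "(q has_sum Q) UNIV"
  shows "((\<lambda>(\<alpha>, \<beta>). p \<alpha> * q \<beta>) has_sum P * Q) (UNIV \<times> UNIV)"
proof -
  have np: "(\<lambda>\<alpha>. norm (p \<alpha>)) summable_on UNIV"
    using summable_on_iff_abs_summable_on_complex[THEN iffD1] hp by (auto simp: summable_on_def)
  have nq: "(\<lambda>\<alpha>. norm (q \<alpha>)) summable_on UNIV"
    using summable_on_iff_abs_summable_on_complex[THEN iffD1] hq by (auto simp: summable_on_def)
  define NQ where "NQ = infsum (\<lambda>\<alpha>. norm (q \<alpha>)) UNIV"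
  have "(\<lambda>(\<alpha>, \<beta>). norm (p \<alpha>) * norm (q \<beta>)) summable_on Sigma UNIV (\<lambda>_. UNIV)"
  proof (rule summable_on_SigmaI[where g = "\<lambda>\<alpha>. norm (p \<alpha>) * NQ"])
    show "((\<lambda>\<beta>. case (\<alpha>, \<beta>) of (\<alpha>, \<beta>) \<Rightarrow> norm (p \<alpha>) * norm (q \<beta>)) has_sum norm (p \<alpha>) * NQ) UNIV"
      for \<alpha>
      unfolding NQ_def using has_sum_cmult_right[OF has_sum_infsum[OF nq], of "norm (p \<alpha>)"] by simp
    show "(\<lambda>\<alpha>. norm (p \<alpha>) * NQ) summable_on UNIV" by (rule summable_on_cmult_left[OF np])
  qed auto
  then have "(\<lambda>x. norm (case x of (\<alpha>, \<beta>) \<Rightarrow> p \<alpha> * q \<beta>)) summable_on UNIV \<times> UNIV"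
    by (rule summable_on_cong[THEN iffD1, rotated]) (auto simp: norm_mult)
  then have s: "(\<lambda>(\<alpha>, \<beta>). p \<alpha> * q \<beta>) summable_on Sigma UNIV (\<lambda>_. UNIV)"
    by (simp add: abs_summable_summable)
  show ?thesis
  proof (rule has_sum_SigmaI[OF _ _ s])
    show "((\<lambda>\<beta>. case (\<alpha>, \<beta>) of (\<alpha>, \<beta>) \<Rightarrow> p \<alpha> * q \<beta>) has_sum p \<alpha> * Q) UNIV" for \<alpha>
      using has_sum_cmult_right[OF hq, of "p \<alpha>"] by simp
    show "((\<lambda>\<alpha>. p \<alpha> * Q) has_sum P * Q) UNIV" by (rule has_sum_cmult_left[OF hp])
  qed
qed

lemma finite_indices_bounded: "finite {\<alpha> :: 'n::finite \<Rightarrow> nat. \<forall>i. \<alpha> i \<le> b i}"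
proof (rule finite_subset)
  show "{\<alpha> :: 'n::finite \<Rightarrow> nat. \<forall>i. \<alpha> i \<le> b i} \<subseteq> PiE UNIV (\<lambda>i. {..b i})"
    by (auto simp: PiE_iff)
qed (rule finite_PiE, auto)

lemma finite_index_splittings: "finite {(\<alpha>, \<beta>). (\<lambda>i. \<alpha> i + \<beta> i) = (\<gamma> :: 'n::finite \<Rightarrow> nat)}"
proof (rule finite_subset)
  show "{(\<alpha>, \<beta>). (\<lambda>i. \<alpha> i + \<beta> i) = \<gamma>}
      \<subseteq> {\<alpha>. \<forall>i. \<alpha> i \<le> \<gamma> i} \<times> {\<alpha>. \<forall>i. \<alpha> i \<le> \<gamma> i}"
    by (auto simp: fun_eq_iff) (metis le_add1, metis le_add2)
qed (simp add: finite_indices_bounded)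

text \<open>Cauchy product: the coefficient of a monomial of index gamma collects all splittings
  gamma = alpha + beta.\<close>
lemma real_analytic_mult:
  fixes f g :: "real ^ 'n::finite \<Rightarrow> complex"
  assumes af: "real_analytic f" and ag: "real_analytic g"
  shows "real_analytic (\<lambda>x. f x * g x)"
  unfolding real_analytic_def
proof
  fix a :: "real ^ 'n"
  let ?Q = "\<lambda>x \<alpha>. \<Prod>i\<in>UNIV. complex_of_real (x $ i - a $ i) ^ \<alpha> i"
  let ?splittings = "\<lambda>\<gamma>. {(\<alpha>, \<beta>). (\<lambda>i. \<alpha> i + \<beta> i) = (\<gamma> :: 'n \<Rightarrow> nat)}"
  obtain r1 c1 where r1: "r1 > 0"
    and h1: "\<And>x. dist x a < r1 \<Longrightarrow> ((\<lambda>\<alpha>. c1 \<alpha> * ?Q x \<alpha>) has_sum f x) UNIV"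
    using af unfolding real_analytic_def by blast
  obtain r2 c2 where r2: "r2 > 0"
    and h2: "\<And>x. dist x a < r2 \<Longrightarrow> ((\<lambda>\<alpha>. c2 \<alpha> * ?Q x \<alpha>) has_sum g x) UNIV"
    using ag unfolding real_analytic_def by blast
  define c where "c \<gamma> = (\<Sum>(\<alpha>, \<beta>)\<in>?splittings \<gamma>. c1 \<alpha> * c2 \<beta>)" for \<gamma>
  show "\<exists>r>0. \<exists>c. \<forall>x. dist x a < r \<longrightarrow> ((\<lambda>\<alpha>. c \<alpha> * ?Q x \<alpha>) has_sum f x * g x) UNIV"
  proof (intro exI[of _ "min r1 r2"] conjI exI[of _ c] allI impI)
    show "min r1 r2 > 0" using r1 r2 by simp
    fix x assume "dist x a < min r1 r2"
    then have d1: "dist x a < r1" and d2: "dist x a < r2" by auto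
    define Q where "Q = ?Q x"
    have QQ: "Q \<alpha> * Q \<beta> = Q (\<lambda>i. \<alpha> i + \<beta> i)" for \<alpha> \<beta>
      unfolding Q_def by (simp add: power_add prod.distrib)
    have bij: "bij_betw (\<lambda>(\<alpha>, \<beta>). ((\<lambda>i. \<alpha> i + \<beta> i), (\<alpha>, \<beta>))) (UNIV \<times> UNIV)
                 (Sigma UNIV ?splittings)"
      by (rule bij_betwI[where g=snd]) auto
    have "((\<lambda>(\<alpha>, \<beta>). (c1 \<alpha> * Q \<alpha>) * (c2 \<beta> * Q \<beta>)) has_sum f x * g x) (UNIV \<times> UNIV)"
      by (rule has_sum_product_complex) (use h1[OF d1] h2[OF d2] in \<open>simp_all add: Q_def\<close>)
    then have "((\<lambda>(\<gamma>, \<alpha>\<beta>). case \<alpha>\<beta> of (\<alpha>, \<beta>) \<Rightarrow> (c1 \<alpha> * Q \<alpha>) * (c2 \<beta> * Q \<beta>))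
                 has_sum f x * g x) (Sigma UNIV ?splittings)"
      using has_sum_reindex_bij_betw[OF bij,
          of "\<lambda>(\<gamma>, \<alpha>\<beta>). case \<alpha>\<beta> of (\<alpha>, \<beta>) \<Rightarrow> (c1 \<alpha> * Q \<alpha>) * (c2 \<beta> * Q \<beta>)" "f x * g x"]
      by (simp add: case_prod_unfold)
    then have "((\<lambda>\<gamma>. \<Sum>\<alpha>\<beta>\<in>?splittings \<gamma>. case \<alpha>\<beta> of (\<alpha>, \<beta>) \<Rightarrow> (c1 \<alpha> * Q \<alpha>) * (c2 \<beta> * Q \<beta>))
                 has_sum f x * g x) UNIV"
      by (rule has_sum_Sigma') (simp add: finite_index_splittings)
    moreover have "(\<Sum>\<alpha>\<beta>\<in>?splittings \<gamma>. case \<alpha>\<beta> of (\<alpha>, \<beta>) \<Rightarrow> (c1 \<alpha> * Q \<alpha>) * (c2 \<beta> * Q \<beta>))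
                   = c \<gamma> * Q \<gamma>" for \<gamma>
    proof -
      have "(\<Sum>\<alpha>\<beta>\<in>?splittings \<gamma>. case \<alpha>\<beta> of (\<alpha>, \<beta>) \<Rightarrow> (c1 \<alpha> * Q \<alpha>) * (c2 \<beta> * Q \<beta>))
          = (\<Sum>\<alpha>\<beta>\<in>?splittings \<gamma>. (case \<alpha>\<beta> of (\<alpha>, \<beta>) \<Rightarrow> c1 \<alpha> * c2 \<beta>) * Q \<gamma>)"
        by (intro sum.cong refl) (auto simp: QQ[symmetric] mult_ac)
      then show ?thesis unfolding c_def by (simp add: sum_distrib_right case_prod_unfold)
    qed
    ultimately show "((\<lambda>\<alpha>. c \<alpha> * ?Q x \<alpha>) has_sum f x * g x) UNIV" unfolding Q_def by simp
  qed
qed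

lemma real_analytic_const: "real_analytic (\<lambda>x :: real ^ 'n::finite. k)"
  unfolding real_analytic_def
proof (intro allI exI conjI impI)
  fix a x :: "real ^ 'n"
  show "(1::real) > 0" by simp
  let ?c = "\<lambda>\<alpha>. if \<alpha> = (\<lambda>_. 0) then k else 0"
  have "((\<lambda>\<alpha>. ?c \<alpha> * (\<Prod>i\<in>UNIV. complex_of_real (x $ i - a $ i) ^ \<alpha> i)) has_sum k) {\<lambda>_. 0}"
    by (rule has_sum_finiteI) auto
  then show "((\<lambda>\<alpha>. ?c \<alpha> * (\<Prod>i\<in>UNIV. complex_of_real (x $ i - a $ i) ^ \<alpha> i)) has_sum k) UNIV"
    by (rule has_sum_cong_neutral[THEN iffD1, rotated -1]) auto
qed

lemma real_analytic_prod:
  fixes F :: "'i \<Rightarrow> real ^ 'n::finite \<Rightarrow> complex"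
  assumes "finite I" "\<And>j. j \<in> I \<Longrightarrow> real_analytic (F j)"
  shows "real_analytic (\<lambda>x. \<Prod>j\<in>I. F j x)"
  using assms
proof (induction I rule: finite_induct)
  case empty then show ?case by (simp add: real_analytic_const)
next
  case (insert j I) then show ?case by (simp add: real_analytic_mult)
qed

definition homogeneous_indices :: "nat \<Rightarrow> ('n::finite \<Rightarrow> nat) set" where
  "homogeneous_indices n = {\<alpha>. total_deg \<alpha> = n}"

definition words :: "nat \<Rightarrow> (nat \<Rightarrow> 'n) set" where
  "words n = {..<n} \<rightarrow>\<^sub>E UNIV"

definition letter_count :: "nat \<Rightarrow> (nat \<Rightarrow> 'n) \<Rightarrow> 'n \<Rightarrow> nat" where
  "letter_count n \<phi> i = card {k \<in> {..<n}. \<phi> k = i}"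

definition words_with_count :: "nat \<Rightarrow> ('n \<Rightarrow> nat) \<Rightarrow> (nat \<Rightarrow> 'n) set" where
  "words_with_count n \<alpha> = {\<phi> \<in> words n. letter_count n \<phi> = \<alpha>}"

lemma finite_homogeneous_indices: "finite (homogeneous_indices n :: ('n::finite \<Rightarrow> nat) set)"
  by (rule finite_subset[OF _ finite_indices_bounded[of "\<lambda>_. n"]])
     (auto simp: homogeneous_indices_def intro: member_le_sum[of _ UNIV, simplified])

lemma finite_words: "finite (words n :: (nat \<Rightarrow> 'n::finite) set)"
  unfolding words_def by (rule finite_PiE) auto

lemma total_deg_letter_count: "total_deg (letter_count n (\<phi> :: nat \<Rightarrow> 'n::finite)) = n"
proof -
  have "total_deg (letter_count n \<phi>) = (\<Sum>i\<in>UNIV. \<Sum>k\<in>{k \<in> {..<n}. \<phi> k = i}. (1::nat))"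
    unfolding letter_count_def by simp
  also have "\<dots> = (\<Sum>k\<in>{..<n}. (1::nat))" by (rule sum.group) auto
  finally show ?thesis by simp
qed

lemma prod_letter_count:
  fixes v :: "'n::finite \<Rightarrow> 'a::comm_monoid_mult"
  shows "(\<Prod>k<n. v (\<phi> k)) = (\<Prod>i\<in>UNIV. v i ^ letter_count n \<phi> i)"
proof -
  have "(\<Prod>k<n. v (\<phi> k)) = (\<Prod>i\<in>UNIV. \<Prod>k\<in>{k \<in> {..<n}. \<phi> k = i}. v (\<phi> k))"
    by (rule prod.group[symmetric]) auto
  also have "\<dots> = (\<Prod>i\<in>UNIV. \<Prod>k\<in>{k \<in> {..<n}. \<phi> k = i}. v i)"
    by (intro prod.cong refl) auto
  also have "\<dots> = (\<Prod>i\<in>UNIV. v i ^ letter_count n \<phi> i)"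
    unfolding letter_count_def by simp
  finally show ?thesis .
qed

lemma multinomial_expansion:
  fixes v :: "'n::finite \<Rightarrow> 'a::comm_semiring_1"
  shows "(\<Sum>i\<in>UNIV. v i) ^ n = (\<Sum>\<alpha>\<in>homogeneous_indices n.
            of_nat (card (words_with_count n \<alpha>)) * (\<Prod>i\<in>UNIV. v i ^ \<alpha> i))"
proof -
  have "(\<Sum>i\<in>UNIV. v i) ^ n = (\<Prod>k<n. \<Sum>i\<in>UNIV. v i)" by simp
  also have "\<dots> = (\<Sum>\<phi>\<in>words n. \<Prod>k<n. v (\<phi> k))"
    unfolding words_def by (rule prod_sum_PiE) auto
  also have "\<dots> = (\<Sum>\<phi>\<in>words n. \<Prod>i\<in>UNIV. v i ^ letter_count n \<phi> i)"
    by (intro sum.cong refl prod_letter_count)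
  also have "\<dots> = (\<Sum>\<alpha>\<in>homogeneous_indices n.
      \<Sum>\<phi>\<in>{\<phi> \<in> words n. letter_count n \<phi> = \<alpha>}. \<Prod>i\<in>UNIV. v i ^ letter_count n \<phi> i)"
    by (rule sum.group[symmetric], rule finite_words, rule finite_homogeneous_indices,
        auto simp: homogeneous_indices_def total_deg_letter_count)
  also have "\<dots> = (\<Sum>\<alpha>\<in>homogeneous_indices n. \<Sum>\<phi>\<in>words_with_count n \<alpha>. \<Prod>i\<in>UNIV. v i ^ \<alpha> i)"
    unfolding words_with_count_def by (intro sum.cong refl) auto
  also have "\<dots> = (\<Sum>\<alpha>\<in>homogeneous_indices n.
      of_nat (card (words_with_count n \<alpha>)) * (\<Prod>i\<in>UNIV. v i ^ \<alpha> i))"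
    by simp
  finally show ?thesis .
qed

lemma abs_summable_if_homogeneous_parts_summable:
  fixes h :: "('n::finite \<Rightarrow> nat) \<Rightarrow> 'a::real_normed_vector"
  assumes "summable (\<lambda>n. \<Sum>\<alpha>\<in>homogeneous_indices n. norm (h \<alpha>))"
  shows "(\<lambda>\<alpha>. norm (h \<alpha>)) summable_on UNIV"
proof (rule nonneg_bdd_above_summable_on)
  show "bdd_above (sum (\<lambda>\<alpha>. norm (h \<alpha>)) ` {F. F \<subseteq> UNIV \<and> finite F})"
  proof (rule bdd_aboveI2)
    fix F :: "('n \<Rightarrow> nat) set" assume "F \<in> {F. F \<subseteq> UNIV \<and> finite F}"
    then have fF: "finite F" by simp
    define N where "N = Max (insert 0 (total_deg ` F))"
    define U where "U = {\<alpha> :: 'n \<Rightarrow> nat. total_deg \<alpha> \<le> N}"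
    have fU: "finite U"
      by (rule finite_subset[OF _ finite_indices_bounded[of "\<lambda>_. N"]])
         (auto simp: U_def intro: order_trans[OF member_le_sum[of _ UNIV, simplified]])
    have FU: "F \<subseteq> U" unfolding U_def N_def using fF by (auto intro: Max_ge)
    have "(\<Sum>\<alpha>\<in>F. norm (h \<alpha>)) \<le> (\<Sum>\<alpha>\<in>U. norm (h \<alpha>))" by (rule sum_mono2[OF fU FU]) auto
    also have "\<dots> = (\<Sum>n\<in>{..N}. \<Sum>\<alpha>\<in>{\<alpha> \<in> U. total_deg \<alpha> = n}. norm (h \<alpha>))"
      by (rule sum.group[symmetric], rule fU, simp, auto simp: U_def)
    also have "\<dots> = (\<Sum>n\<in>{..N}. \<Sum>\<alpha>\<in>homogeneous_indices n. norm (h \<alpha>))"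
      by (intro sum.cong refl) (auto simp: U_def homogeneous_indices_def)
    also have "\<dots> \<le> (\<Sum>n. \<Sum>\<alpha>\<in>homogeneous_indices n. norm (h \<alpha>))"
      unfolding atMost_atLeast0 atLeast0LessThan[symmetric] lessThan_Suc_atMost[symmetric]
      by (rule sum_le_suminf[OF assms]) (auto intro: sum_nonneg)
    finally show "(\<Sum>\<alpha>\<in>F. norm (h \<alpha>)) \<le> (\<Sum>n. \<Sum>\<alpha>\<in>homogeneous_indices n. norm (h \<alpha>))" .
  qed
qed auto

lemma sums_homogeneous_parts:
  fixes h :: "('n::finite \<Rightarrow> nat) \<Rightarrow> complex"
  assumes "(h has_sum S) UNIV"
  shows "(\<lambda>n. \<Sum>\<alpha>\<in>homogeneous_indices n. h \<alpha>) sums S"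
proof -
  have bij: "bij_betw (\<lambda>\<alpha>. (total_deg \<alpha>, \<alpha>)) UNIV (Sigma UNIV homogeneous_indices)"
    by (rule bij_betwI[where g=snd]) (auto simp: homogeneous_indices_def)
  have "((\<lambda>(n, \<alpha>). h \<alpha>) has_sum S) (Sigma UNIV homogeneous_indices)"
    using assms has_sum_reindex_bij_betw[OF bij, of "\<lambda>(n, \<alpha>). h \<alpha>" S] by simp
  then have "((\<lambda>n. \<Sum>\<alpha>\<in>homogeneous_indices n. h \<alpha>) has_sum S) UNIV"
    by (rule has_sum_Sigma') (simp add: finite_homogeneous_indices)
  then show ?thesis by (rule has_sum_imp_sums)
qed

lemma bounded_linear_coordinate_expansion:
  fixes l :: "real ^ 'n::finite \<Rightarrow> complex"
  assumes bl: "bounded_linear l"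
  shows "l y = (\<Sum>i\<in>UNIV. l (axis i 1) * complex_of_real (y $ i))"
proof -
  have "y = (\<Sum>i\<in>UNIV. (y $ i) *\<^sub>R axis i 1)"
    by (simp add: vec_eq_iff axis_def sum_component if_distrib cong: if_cong)
  then have "l y = l (\<Sum>i\<in>UNIV. (y $ i) *\<^sub>R axis i 1)" by simp
  also have "\<dots> = (\<Sum>i\<in>UNIV. (y $ i) *\<^sub>R l (axis i 1))"
    using bl by (simp add: linear_sum[OF bounded_linear.linear[OF bl]] linear_simps(5)[OF bl] o_def)
  also have "\<dots> = (\<Sum>i\<in>UNIV. l (axis i 1) * complex_of_real (y $ i))"
    by (simp add: scaleR_conv_of_real mult.commute)
  finally show ?thesis .
qed

lemma entire_sums_Taylor_series:
  fixes F :: "complex \<Rightarrow> complex"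
  assumes "F holomorphic_on UNIV"
  shows "(\<lambda>n. (deriv ^^ n) F z / fact n * t ^ n) sums F (z + t)"
proof -
  have "F holomorphic_on ball z (norm t + 1)" using assms by (rule holomorphic_on_subset) auto
  moreover have "z + t \<in> ball z (norm t + 1)" by (simp add: dist_norm)
  ultimately have "(\<lambda>n. (deriv ^^ n) F z / fact n * ((z + t) - z) ^ n) sums F (z + t)"
    by (rule holomorphic_power_series)
  then show ?thesis by simp
qed

text \<open>Expand F around l a in powers of l (x - a) = sum_i w_i (x_i - a_i) and multiply out
  with the multinomial theorem; absolute convergence of the Taylor series of the entire
  function F justifies the rearrangement.\<close>
lemma real_analytic_entire_comp_linear:
  fixes F :: "complex \<Rightarrow> complex" and l :: "real ^ 'n::finite \<Rightarrow> complex"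
  assumes F: "F holomorphic_on UNIV" and bl: "bounded_linear l"
  shows "real_analytic (\<lambda>x. F (l x))"
  unfolding real_analytic_def
proof (intro allI exI conjI)
  fix a :: "real ^ 'n"
  define g where "g n = (deriv ^^ n) F (l a) / fact n" for n
  define w where "w i = l (axis i 1)" for i
  define c where "c \<alpha> = g (total_deg \<alpha>) * of_nat (card (words_with_count (total_deg \<alpha>) \<alpha>))
                          * (\<Prod>i\<in>UNIV. w i ^ \<alpha> i)" for \<alpha> :: "'n \<Rightarrow> nat"
  have series: "(\<lambda>n. g n * t ^ n) sums F (l a + t)" for t
    unfolding g_def by (rule entire_sums_Taylor_series[OF F])
  show "(1::real) > 0" by simp
  fix x :: "real ^ 'n"
  define y where "y = x - a"
  define h where "h \<alpha> = c \<alpha> * vec_monomial y \<alpha>" for \<alpha> :: "'n \<Rightarrow> nat"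
  define t where "t = (\<Sum>i\<in>UNIV. w i * complex_of_real (y $ i))"
  define T where "T = (\<Sum>i\<in>UNIV. norm (w i) * \<bar>y $ i\<bar>)"
  have T0: "T \<ge> 0" unfolding T_def by (intro sum_nonneg) auto
  have lx: "l x = l a + t"
    unfolding t_def w_def y_def
    using linear_simps(2)[OF bl, of x a] bounded_linear_coordinate_expansion[OF bl, of "x - a"]
    by (simp add: algebra_simps)
  have parts: "(\<Sum>\<alpha>\<in>homogeneous_indices n. h \<alpha>) = g n * t ^ n" for n
  proof -
    have "g n * t ^ n = (\<Sum>\<alpha>\<in>homogeneous_indices n.
        g n * (of_nat (card (words_with_count n \<alpha>)) * (\<Prod>i\<in>UNIV. (w i * complex_of_real (y $ i)) ^ \<alpha> i)))"
      unfolding t_def multinomial_expansion sum_distrib_left ..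
    also have "\<dots> = (\<Sum>\<alpha>\<in>homogeneous_indices n. h \<alpha>)"
      by (intro sum.cong refl)
         (simp add: h_def c_def vec_monomial_def homogeneous_indices_def power_mult_distrib
            prod.distrib mult.assoc)
    finally show ?thesis ..
  qed
  have norm_parts: "(\<Sum>\<alpha>\<in>homogeneous_indices n. norm (h \<alpha>)) = norm (g n) * T ^ n" for n
  proof -
    have "norm (g n) * T ^ n = (\<Sum>\<alpha>\<in>homogeneous_indices n.
        norm (g n) * (of_nat (card (words_with_count n \<alpha>)) * (\<Prod>i\<in>UNIV. (norm (w i) * \<bar>y $ i\<bar>) ^ \<alpha> i)))"
      unfolding T_def multinomial_expansion sum_distrib_left ..
    also have "\<dots> = (\<Sum>\<alpha>\<in>homogeneous_indices n. norm (h \<alpha>))"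
    proof (intro sum.cong refl)
      fix \<alpha> :: "'n \<Rightarrow> nat" assume "\<alpha> \<in> homogeneous_indices n"
      then have d: "total_deg \<alpha> = n" by (simp add: homogeneous_indices_def)
      show "norm (g n) * (of_nat (card (words_with_count n \<alpha>)) * (\<Prod>i\<in>UNIV. (norm (w i) * \<bar>y $ i\<bar>) ^ \<alpha> i))
          = norm (h \<alpha>)"
        unfolding h_def c_def vec_monomial_def d
        by (simp add: norm_mult prod_norm[symmetric] norm_power power_mult_distrib prod.distrib)
    qed
    finally show ?thesis ..
  qed
  have "summable (\<lambda>n. norm (g n * complex_of_real T ^ n))"
    by (rule powser_insidea[OF sums_summable[OF series[of "complex_of_real (T + 1)"]]])
       (use T0 in simp)
  then have "summable (\<lambda>n. \<Sum>\<alpha>\<in>homogeneous_indices n. norm (h \<alpha>))"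
    using T0 by (simp add: norm_parts norm_mult norm_power)
  then have "h summable_on UNIV"
    by (rule abs_summable_summable[OF abs_summable_if_homogeneous_parts_summable])
  then have sum_h: "(h has_sum infsum h UNIV) UNIV" by simp
  have "(\<lambda>n. g n * t ^ n) sums infsum h UNIV"
    using sums_homogeneous_parts[OF sum_h] by (simp add: parts)
  then have "infsum h UNIV = F (l x)" using series[of t] lx by (simp add: sums_unique2)
  with sum_h show "dist x a < 1 \<longrightarrow>
      ((\<lambda>\<alpha>. c \<alpha> * (\<Prod>i\<in>UNIV. complex_of_real (x $ i - a $ i) ^ \<alpha> i)) has_sum F (l x)) UNIV"
    by (simp add: h_def[abs_def] vec_monomial_def y_def)
qed

lemma has_derivative_comp_bounded_linear:
  assumes "bounded_linear l" "(F has_field_derivative F') (at (l x))"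
  shows "((\<lambda>x. F (l x)) has_derivative (\<lambda>h. F' * l h)) (at x)"
  using has_derivative_compose[OF bounded_linear_imp_has_derivative[OF assms(1)]
      assms(2)[unfolded has_field_derivative_def]] .

section \<open>Coordinate pairs and roots\<close>

definition real_pairing :: "complex ^ 'n \<Rightarrow> real ^ 'n \<Rightarrow> complex" where
  "real_pairing lam v = (\<Sum>i\<in>UNIV. lam $ i * complex_of_real (v $ i))"

lemma bounded_linear_real_pairing: "bounded_linear (real_pairing lam)"
  unfolding real_pairing_def by (rule bounded_linear_coordinate_combination)

lemma pairing_eq_real_pairing:
  "pairing lam \<zeta> = real_pairing lam (\<chi> i. Re (\<zeta> $ i)) + \<i> * real_pairing lam (\<chi> i. Im (\<zeta> $ i))"
  unfolding pairing_def real_pairing_def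
  by (subst complex_eq[of "\<zeta> $ i" for i]) (simp add: algebra_simps sum.distrib sum_distrib_left)

locale coordinate_pairs =
  fixes ix :: "nat \<Rightarrow> 'n::finite"
  assumes bij: "bij_betw ix {..<CARD('n)} UNIV"
begin

abbreviation "A j \<equiv> ix (2 * j)"
abbreviation "B j \<equiv> ix (Suc (2 * j))"

definition root :: "nat \<Rightarrow> real ^ 'n" where
  "root j = axis (A j) 1 - axis (B j) 1"

definition pair_diff :: "real ^ 'n \<Rightarrow> nat \<Rightarrow> real" where
  "pair_diff x j = x $ A j - x $ B j"

lemma A_eq_iff: "j < CARD('n) div 2 \<Longrightarrow> l < CARD('n) div 2 \<Longrightarrow> A l = A j \<longleftrightarrow> l = j"
  using bij by (auto simp: bij_betw_def inj_on_eq_iff)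

lemma B_eq_iff: "j < CARD('n) div 2 \<Longrightarrow> l < CARD('n) div 2 \<Longrightarrow> B l = B j \<longleftrightarrow> l = j"
  using bij by (auto simp: bij_betw_def inj_on_eq_iff)

lemma A_neq_B: "j < CARD('n) div 2 \<Longrightarrow> l < CARD('n) div 2 \<Longrightarrow> A l \<noteq> B j"
  using bij by (auto simp: bij_betw_def inj_on_eq_iff; presburger)

lemma root_A: "j < CARD('n) div 2 \<Longrightarrow> l < CARD('n) div 2 \<Longrightarrow> root j $ A l = (if l = j then 1 else 0)"
  unfolding root_def using A_eq_iff[of j l] A_neq_B[of j l] A_neq_B[of l l]
  by (auto simp: axis_def)

lemma root_B: "j < CARD('n) div 2 \<Longrightarrow> l < CARD('n) div 2 \<Longrightarrow> root j $ B l = (if l = j then -1 else 0)"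
  unfolding root_def using B_eq_iff[of j l] A_neq_B[of l j] A_neq_B[of j j]
  by (auto simp: axis_def)

lemma root_other: "i \<noteq> A j \<Longrightarrow> i \<noteq> B j \<Longrightarrow> root j $ i = 0"
  unfolding root_def by (simp add: axis_def)

lemma pair_diff_root:
  "j < CARD('n) div 2 \<Longrightarrow> l < CARD('n) div 2 \<Longrightarrow> pair_diff (root j) l = (if l = j then 2 else 0)"
  by (simp add: pair_diff_def root_A root_B)

lemma sum_root_A:
  assumes "k \<le> CARD('n) div 2" "l < CARD('n) div 2"
  shows "(\<Sum>j<k. c j *\<^sub>R root j) $ A l = (if l < k then c l else 0)"
proof -
  have "(\<Sum>j<k. c j *\<^sub>R root j) $ A l = (\<Sum>j<k. if l = j then c j else 0)"
    unfolding sum_component using assms by (intro sum.cong refl) (simp add: root_A)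
  then show ?thesis by (simp add: sum.delta')
qed

lemma sum_root_B:
  assumes "k \<le> CARD('n) div 2" "l < CARD('n) div 2"
  shows "(\<Sum>j<k. c j *\<^sub>R root j) $ B l = (if l < k then - c l else 0)"
proof -
  have "(\<Sum>j<k. c j *\<^sub>R root j) $ B l = (\<Sum>j<k. if l = j then - c j else 0)"
    unfolding sum_component using assms by (intro sum.cong refl) (simp add: root_B)
  then show ?thesis by (simp add: sum.delta')
qed

lemma real_pairing_root: "j < CARD('n) div 2 \<Longrightarrow> real_pairing lam (root j) = lam $ A j - lam $ B j"
  unfolding root_def real_pairing_def using A_neq_B[of j j]
  by (simp add: axis_def of_real_diff right_diff_distrib sum_subtractf if_distrib[of complex_of_real]
      if_distrib[of "(*) _"] sum.delta cong: if_cong)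

lemma h0_eq: "h0 ix x = x - (\<Sum>j<CARD('n) div 2. (pair_diff x j / 2) *\<^sub>R root j)"
  unfolding h0_def root_def pair_diff_def by simp

lemma h0_A_eq_B: "l < CARD('n) div 2 \<Longrightarrow> h0 ix x $ A l = h0 ix x $ B l"
  unfolding h0_eq vector_minus_component sum_root_A[OF le_refl] sum_root_B[OF le_refl]
  by (simp add: pair_diff_def field_simps)

lemma tau_pair_eq:
  "j < CARD('n) div 2 \<Longrightarrow> tau_pair (A j) (B j) y = y - (pair_diff y j / 2) *\<^sub>R root j"
  unfolding tau_pair_def vec_eq_iff
proof
  fix i assume j: "j < CARD('n) div 2"
  show "(\<chi> i. if i = A j \<or> i = B j then (y $ A j + y $ B j) / 2 else y $ i) $ i
      = (y - (pair_diff y j / 2) *\<^sub>R root j) $ i"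
  proof (cases "i = A j \<or> i = B j")
    case True then show ?thesis using root_A[OF j j] root_B[OF j j] A_neq_B[OF j j]
      by (auto simp: pair_diff_def field_simps)
  next
    case False then show ?thesis using root_other[of i j] by simp
  qed
qed

lemma pair_diff_minus_root: "j < CARD('n) div 2 \<Longrightarrow> l < CARD('n) div 2 \<Longrightarrow>
   pair_diff (y - c *\<^sub>R root j) l = pair_diff y l - (if l = j then 2 * c else 0)"
  using pair_diff_root[of j l] unfolding pair_diff_def by (auto simp: algebra_simps)

lemma h0_minus_root:
  assumes j: "j < CARD('n) div 2"
  shows "h0 ix (y - c *\<^sub>R root j) = h0 ix y"
proof -
  have "(\<Sum>l<CARD('n) div 2. (pair_diff (y - c *\<^sub>R root j) l / 2) *\<^sub>R root l)
      = (\<Sum>l<CARD('n) div 2. (pair_diff y l / 2) *\<^sub>R root l - (if l = j then c *\<^sub>R root j else 0))"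
    by (intro sum.cong refl) (simp add: pair_diff_minus_root[OF j] scaleR_diff_left diff_divide_distrib)
  also have "\<dots> = (\<Sum>l<CARD('n) div 2. (pair_diff y l / 2) *\<^sub>R root l) - c *\<^sub>R root j"
    using j by (simp add: sum_subtractf)
  finally show ?thesis unfolding h0_eq by simp
qed

end

section \<open>The kernel solves the system\<close>

locale kernel_setup = coordinate_pairs ix for ix :: "nat \<Rightarrow> 'n::finite" +
  fixes \<kappa> :: "nat \<Rightarrow> real" and lam :: "complex ^ 'n"
  assumes kappa_pos: "\<And>j. j < CARD('n) div 2 \<Longrightarrow> \<kappa> j > 0"
begin

lemma kappa_nonneg: "j < CARD('n) div 2 \<Longrightarrow> \<kappa> j \<ge> 0"
  using kappa_pos[of j] by simp

definition pair_coeff :: "nat \<Rightarrow> complex" where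
  "pair_coeff j = \<i> / 2 * (lam $ A j - lam $ B j)"

definition phase :: "real ^ 'n \<Rightarrow> complex" where
  "phase x = \<i> * real_pairing lam (h0 ix x)"

definition pair_arg :: "nat \<Rightarrow> real ^ 'n \<Rightarrow> complex" where
  "pair_arg j x = pair_coeff j * complex_of_real (pair_diff x j)"

definition pair_factor :: "nat \<Rightarrow> real ^ 'n \<Rightarrow> complex" where
  "pair_factor j x = M1 (\<kappa> j) (pair_arg j x)"

definition kernel :: "real ^ 'n \<Rightarrow> complex" where
  "kernel x = exp (phase x) * (\<Prod>j<CARD('n) div 2. pair_factor j x)"

lemma M_kernel_eq_kernel: "M_kernel ix \<kappa> lam = kernel"
  by (rule ext)
     (simp add: M_kernel_def kernel_def phase_def pair_factor_def pair_arg_def pair_coeff_def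
        pair_diff_def pairing_def real_pairing_def)

lemma phase_plus_pair_args:
  "phase \<xi> + (\<Sum>j<CARD('n) div 2. pair_arg j \<xi>) = \<i> * real_pairing lam \<xi>"
proof -
  have "real_pairing lam (\<Sum>j<CARD('n) div 2. (pair_diff \<xi> j / 2) *\<^sub>R root j)
      = (\<Sum>i\<in>UNIV. \<Sum>j<CARD('n) div 2.
           complex_of_real (pair_diff \<xi> j / 2) * (lam $ i * complex_of_real (root j $ i)))"
    unfolding real_pairing_def sum_component by (simp add: sum_distrib_left mult_ac)
  also have "\<dots> = (\<Sum>j<CARD('n) div 2. \<Sum>i\<in>UNIV.
           complex_of_real (pair_diff \<xi> j / 2) * (lam $ i * complex_of_real (root j $ i)))"
    by (rule sum.swap)
  also have "\<dots> = (\<Sum>j<CARD('n) div 2. complex_of_real (pair_diff \<xi> j / 2) * real_pairing lam (root j))"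
    by (simp add: real_pairing_def sum_distrib_left)
  also have "\<dots> = - \<i> * (\<Sum>j<CARD('n) div 2. pair_arg j \<xi>)"
    unfolding sum_distrib_left
    by (intro sum.cong refl) (simp add: real_pairing_root pair_arg_def pair_coeff_def field_simps)
  finally show ?thesis
    unfolding phase_def h0_eq linear_simps(2)[OF bounded_linear_real_pairing]
    by (simp add: algebra_simps)
qed

lemma bounded_linear_pair_arg: "bounded_linear (pair_arg j)"
proof -
  have "bounded_linear (\<lambda>x. complex_of_real (pair_diff x j))"
    unfolding linear_conv_bounded_linear[symmetric] pair_diff_def
    by (rule linearI) (simp_all add: algebra_simps scaleR_conv_of_real[where 'a=complex])
  then show ?thesis
    unfolding pair_arg_def by (rule bounded_linear_compose[OF bounded_linear_mult_right])
qed

lemma bounded_linear_phase: "bounded_linear phase"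
proof -
  have "phase = (\<lambda>x. \<i> * real_pairing lam x - (\<Sum>j<CARD('n) div 2. pair_arg j x))"
    using phase_plus_pair_args by (auto simp: fun_eq_iff algebra_simps)
  then show ?thesis
    by (simp add: bounded_linear_sub bounded_linear_sum bounded_linear_pair_arg
        bounded_linear_compose[OF bounded_linear_mult_right bounded_linear_real_pairing])
qed

lemma has_derivative_exp_phase:
  "((\<lambda>x. exp (phase x)) has_derivative (\<lambda>h. exp (phase x) * phase h)) (at x)"
  by (rule has_derivative_comp_bounded_linear[OF bounded_linear_phase DERIV_exp])

lemma has_derivative_pair_factor:
  "j < CARD('n) div 2 \<Longrightarrow>
     (pair_factor j has_derivative (\<lambda>h. M1_deriv (\<kappa> j) (pair_arg j x) * pair_arg j h)) (at x)"
  unfolding pair_factor_def[abs_def]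
  by (rule has_derivative_comp_bounded_linear[OF bounded_linear_pair_arg
        has_field_derivative_M1[OF kappa_nonneg]])

definition other_factors :: "nat \<Rightarrow> real ^ 'n \<Rightarrow> complex" where
  "other_factors j x = (\<Prod>l\<in>{..<CARD('n) div 2} - {j}. pair_factor l x)"

lemma pair_factor_mult_other_factors:
  "j < CARD('n) div 2 \<Longrightarrow>
     pair_factor j x * other_factors j x = (\<Prod>l<CARD('n) div 2. pair_factor l x)"
  unfolding other_factors_def by (subst prod.remove[of _ j]) auto

lemma phase_tau_pair: "j < CARD('n) div 2 \<Longrightarrow> phase (tau_pair (A j) (B j) y) = phase y"
  unfolding phase_def tau_pair_eq by (simp add: h0_minus_root)

lemma pair_factor_tau_pair: "j < CARD('n) div 2 \<Longrightarrow> l < CARD('n) div 2 \<Longrightarrow>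
    pair_factor l (tau_pair (A j) (B j) y) = (if l = j then 1 else pair_factor l y)"
  unfolding tau_pair_eq pair_factor_def pair_arg_def by (simp add: pair_diff_minus_root)

lemma other_factors_tau_pair:
  "j < CARD('n) div 2 \<Longrightarrow> other_factors j (tau_pair (A j) (B j) y) = other_factors j y"
  unfolding other_factors_def by (intro prod.cong refl) (simp add: pair_factor_tau_pair)

text \<open>The j-th difference quotient of kernel, written so that it is continuous across
  x_A = x_B (by M1 k z - 1 = z * M1_tail k z).\<close>
definition kernel_quot :: "nat \<Rightarrow> real ^ 'n \<Rightarrow> complex" where
  "kernel_quot j x = exp (phase x) * other_factors j x * (pair_coeff j * M1_tail (\<kappa> j) (pair_arg j x))"

lemma kernel_difference_quotient:
  assumes j: "j < CARD('n) div 2" and ne: "y $ A j \<noteq> y $ B j"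
  shows "(kernel y - kernel (tau_pair (A j) (B j) y)) / complex_of_real (y $ A j - y $ B j)
       = kernel_quot j y"
proof -
  have "kernel y = exp (phase y) * other_factors j y * pair_factor j y"
    unfolding kernel_def pair_factor_mult_other_factors[OF j, symmetric] by simp
  moreover have "kernel (tau_pair (A j) (B j) y) = exp (phase y) * other_factors j y"
    unfolding kernel_def pair_factor_mult_other_factors[OF j, symmetric]
    using j by (simp add: phase_tau_pair other_factors_tau_pair pair_factor_tau_pair)
  moreover have "pair_factor j y - 1
      = pair_coeff j * complex_of_real (pair_diff y j) * M1_tail (\<kappa> j) (pair_arg j y)"
    unfolding pair_factor_def using M1_minus_1[OF kappa_nonneg[OF j]] by (simp add: pair_arg_def)
  ultimately have "kernel y - kernel (tau_pair (A j) (B j) y)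
      = complex_of_real (pair_diff y j) * kernel_quot j y"
    unfolding kernel_quot_def by (simp add: algebra_simps)
  then show ?thesis using ne by (simp add: pair_diff_def)
qed

lemma isCont_kernel_quot: "j < CARD('n) div 2 \<Longrightarrow> isCont (kernel_quot j) x"
proof -
  assume j: "j < CARD('n) div 2"
  have "isCont (pair_factor l) x" if "l < CARD('n) div 2" for l
    using has_derivative_pair_factor[OF that] has_derivative_continuous by blast
  then have "isCont (other_factors j) x"
    unfolding other_factors_def[abs_def] by (intro continuous_intros) auto
  moreover have "isCont (\<lambda>x. M1_tail (\<kappa> j) (pair_arg j x)) x"
    by (rule isCont_o2[OF linear_continuous_at[OF bounded_linear_pair_arg]
          isCont_M1_tail[OF kappa_nonneg[OF j]]])
  moreover have "isCont (\<lambda>x. exp (phase x)) x"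
    using has_derivative_exp_phase has_derivative_continuous by blast
  ultimately show ?thesis
    unfolding kernel_quot_def[abs_def]
    using linear_continuous_at[OF bounded_linear_phase] by (intro continuous_intros)
qed

lemma islimpt_pair_unequal: "j < CARD('n) div 2 \<Longrightarrow> (x::real^'n) islimpt {y. y $ A j \<noteq> y $ B j}"
proof (rule islimpt_approachable[THEN iffD2], intro allI impI)
  fix e :: real assume j: "j < CARD('n) div 2" and e: "e > 0"
  define d where "d = (if x $ A j = x $ B j then e/2 else min (e/2) (\<bar>x $ A j - x $ B j\<bar> / 2))"
  have d: "0 < d" "d < e" using e by (auto simp: d_def)
  define x' where "x' = x + d *\<^sub>R axis (A j) 1"
  have "x' $ A j - x' $ B j = x $ A j - x $ B j + d"
    unfolding x'_def using A_neq_B[OF j j] by (simp add: axis_def)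
  moreover have "x $ A j - x $ B j \<noteq> - d"
  proof
    assume diff: "x $ A j - x $ B j = - d"
    then have "x $ A j \<noteq> x $ B j" using d by auto
    then have "d = min (e / 2) (\<bar>x $ A j - x $ B j\<bar> / 2)" by (simp add: d_def)
    then have "d \<le> \<bar>x $ A j - x $ B j\<bar> / 2" by (metis min.cobounded2)
    with diff d show False by simp
  qed
  ultimately have "x' \<in> {y. y $ A j \<noteq> y $ B j}" by auto
  moreover have "x' \<noteq> x" using d unfolding x'_def by (auto simp: vec_eq_iff axis_def)
  moreover have "dist x' x < e" using d unfolding x'_def by (simp add: dist_norm)
  ultimately show "\<exists>x'\<in>{y. y $ A j \<noteq> y $ B j}. x' \<noteq> x \<and> dist x' x < e" by blast
qed

lemma diff_quot_kernel: "j < CARD('n) div 2 \<Longrightarrow> diff_quot kernel (A j) (B j) x = kernel_quot j x"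
proof -
  assume j: "j < CARD('n) div 2"
  show ?thesis
  proof (cases "x $ A j = x $ B j")
    case False
    then show ?thesis
      unfolding diff_quot_def Let_def using kernel_difference_quotient[OF j False] by simp
  next
    case True
    let ?S = "{y. y $ A j \<noteq> y $ B j}"
    let ?q = "\<lambda>y. (kernel y - kernel (tau_pair (A j) (B j) y)) / complex_of_real (y $ A j - y $ B j)"
    have nontrivial: "at x within ?S \<noteq> bot"
      using islimpt_pair_unequal[OF j] trivial_limit_within by blast
    have "(kernel_quot j \<longlongrightarrow> kernel_quot j x) (at x within ?S)"
      by (rule tendsto_within_subset[OF isCont_kernel_quot[OF j, unfolded isCont_def] subset_UNIV])
    moreover have "eventually (\<lambda>y. ?q y = kernel_quot j y) (at x within ?S)"
      unfolding eventually_at_filter using kernel_difference_quotient[OF j] by auto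
    ultimately have "(?q \<longlongrightarrow> kernel_quot j x) (at x within ?S)"
      by (simp add: tendsto_cong)
    then have "Lim (at x within ?S) ?q = kernel_quot j x" by (rule tendsto_Lim[OF nontrivial])
    then show ?thesis unfolding diff_quot_def Let_def using True by simp
  qed
qed

lemma has_derivative_kernel:
  "(kernel has_derivative (\<lambda>h. exp (phase x) *
       (\<Sum>j<CARD('n) div 2. M1_deriv (\<kappa> j) (pair_arg j x) * pair_arg j h * other_factors j x)
     + exp (phase x) * phase h * (\<Prod>j<CARD('n) div 2. pair_factor j x))) (at x)"
proof -
  have "((\<lambda>x. \<Prod>j<CARD('n) div 2. pair_factor j x) has_derivative
      (\<lambda>h. \<Sum>j<CARD('n) div 2. M1_deriv (\<kappa> j) (pair_arg j x) * pair_arg j h * other_factors j x)) (at x)"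
    unfolding other_factors_def by (rule has_derivative_prod) (rule has_derivative_pair_factor, simp)
  from has_derivative_mult[OF has_derivative_exp_phase this]
  show ?thesis unfolding kernel_def[abs_def] by (simp add: algebra_simps)
qed

text \<open>Per pair, the derivative term and the difference term combine via M1' + k M1_tail = M1.\<close>
lemma kernel_pair_term:
  assumes j: "j < CARD('n) div 2"
  shows "exp (phase x) * (M1_deriv (\<kappa> j) (pair_arg j x) * pair_arg j \<xi> * other_factors j x)
       + complex_of_real (\<kappa> j * (\<xi> $ A j - \<xi> $ B j)) * kernel_quot j x
     = kernel x * pair_arg j \<xi>"
proof -
  have deriv: "M1_deriv (\<kappa> j) (pair_arg j x)
      = M1 (\<kappa> j) (pair_arg j x) - complex_of_real (\<kappa> j) * M1_tail (\<kappa> j) (pair_arg j x)"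
    using M1_deriv_plus_tail[OF kappa_nonneg[OF j]] by (simp add: algebra_simps)
  have "kernel x = exp (phase x) * (pair_factor j x * other_factors j x)"
    unfolding kernel_def pair_factor_mult_other_factors[OF j] ..
  then have kernel_x: "kernel x = exp (phase x) * (M1 (\<kappa> j) (pair_arg j x) * other_factors j x)"
    by (simp only: pair_factor_def)
  show ?thesis
    unfolding deriv kernel_x kernel_quot_def pair_arg_def[of j \<xi>] pair_diff_def
    by (simp add: algebra_simps)
qed

lemma T_real_kernel: "T_real ix \<kappa> kernel \<xi> x = \<i> * real_pairing lam \<xi> * kernel x"
proof -
  let ?term = "\<lambda>j. exp (phase x) * (M1_deriv (\<kappa> j) (pair_arg j x) * pair_arg j \<xi> * other_factors j x)
                 + complex_of_real (\<kappa> j * (\<xi> $ A j - \<xi> $ B j)) * kernel_quot j x"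
  have "T_real ix \<kappa> kernel \<xi> x
      = exp (phase x) * (\<Sum>j<CARD('n) div 2. M1_deriv (\<kappa> j) (pair_arg j x) * pair_arg j \<xi> * other_factors j x)
        + exp (phase x) * phase \<xi> * (\<Prod>j<CARD('n) div 2. pair_factor j x)
        + (\<Sum>j<CARD('n) div 2. complex_of_real (\<kappa> j * (\<xi> $ A j - \<xi> $ B j)) * kernel_quot j x)"
    unfolding T_real_def dir_deriv_def frechet_derivative_at[OF has_derivative_kernel, symmetric]
    by (simp add: diff_quot_kernel)
  also have "\<dots> = (\<Sum>j<CARD('n) div 2. ?term j)
        + exp (phase x) * phase \<xi> * (\<Prod>j<CARD('n) div 2. pair_factor j x)"
    by (simp add: sum.distrib sum_distrib_left add_ac)
  also have "\<dots> = (\<Sum>j<CARD('n) div 2. kernel x * pair_arg j \<xi>) + kernel x * phase \<xi>"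
  proof -
    have "(\<Sum>j<CARD('n) div 2. ?term j) = (\<Sum>j<CARD('n) div 2. kernel x * pair_arg j \<xi>)"
      by (intro sum.cong refl kernel_pair_term) simp
    moreover have "exp (phase x) * phase \<xi> * (\<Prod>j<CARD('n) div 2. pair_factor j x) = kernel x * phase \<xi>"
      unfolding kernel_def by (simp add: mult_ac)
    ultimately show ?thesis by simp
  qed
  also have "\<dots> = kernel x * (phase \<xi> + (\<Sum>j<CARD('n) div 2. pair_arg j \<xi>))"
    by (simp add: sum_distrib_left algebra_simps)
  finally show ?thesis unfolding phase_plus_pair_args by simp
qed

lemma T_op_kernel: "T_op ix \<kappa> kernel \<zeta> x = \<i> * pairing lam \<zeta> * kernel x"
  unfolding T_op_def T_real_kernel pairing_eq_real_pairing by (simp add: algebra_simps)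

lemma real_analytic_kernel: "real_analytic kernel"
proof -
  have "real_analytic (\<lambda>x. exp (phase x))"
    by (rule real_analytic_entire_comp_linear[OF holomorphic_on_exp bounded_linear_phase])
  moreover have "real_analytic (\<lambda>x. \<Prod>j<CARD('n) div 2. pair_factor j x)"
    unfolding pair_factor_def
    by (rule real_analytic_prod)
       (auto intro: real_analytic_entire_comp_linear[OF holomorphic_M1 bounded_linear_pair_arg]
         kappa_nonneg)
  ultimately show ?thesis unfolding kernel_def[abs_def] by (rule real_analytic_mult)
qed

lemma kernel_0: "kernel 0 = 1"
  using linear_simps(3)[OF bounded_linear_phase] linear_simps(3)[OF bounded_linear_pair_arg]
  by (simp add: kernel_def pair_factor_def)

end

section \<open>Uniqueness\<close>

locale kernel_eigenfunction = kernel_setup ix \<kappa> lam for ix :: "nat \<Rightarrow> 'n::finite" and \<kappa> lam +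
  fixes f :: "real ^ 'n \<Rightarrow> complex"
  assumes analytic: "real_analytic f"
    and eigen: "\<And>\<zeta> x. T_op ix \<kappa> f \<zeta> x = \<i> * pairing lam \<zeta> * f x"
    and f_0: "f 0 = 1"
begin

definition Df :: "real ^ 'n \<Rightarrow> real ^ 'n \<Rightarrow> complex" where
  "Df x = frechet_derivative f (at x)"

lemma has_derivative_f: "(f has_derivative Df x) (at x)"
  unfolding Df_def using real_analytic_has_derivative[OF analytic, of x] frechet_derivative_works
  by (auto simp: differentiable_def)

lemma bounded_linear_Df: "bounded_linear (Df x)"
  using has_derivative_f by (rule has_derivative_bounded_linear)

lemma isCont_f: "isCont f x"
  using has_derivative_f has_derivative_continuous by blast

lemma T_real_eigen:
  "Df x \<xi> + (\<Sum>j<CARD('n) div 2. complex_of_real (\<kappa> j * (\<xi> $ A j - \<xi> $ B j)) * diff_quot f (A j) (B j) x)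
     = \<i> * real_pairing lam \<xi> * f x"
proof -
  define \<zeta> where "\<zeta> = (\<chi> i. complex_of_real (\<xi> $ i))"
  have re: "(\<chi> i. Re (\<zeta> $ i)) = \<xi>" and im: "(\<chi> i. Im (\<zeta> $ i)) = 0"
    unfolding \<zeta>_def by (simp_all add: vec_eq_iff)
  have "T_real ix \<kappa> f 0 x = 0"
    unfolding T_real_def dir_deriv_def Df_def[symmetric]
    using linear_simps(3)[OF bounded_linear_Df[of x]] by simp
  then have "T_real ix \<kappa> f \<xi> x = \<i> * real_pairing lam \<xi> * f x"
    using eigen[of \<zeta> x] unfolding T_op_def pairing_eq_real_pairing re im
    by (simp add: real_pairing_def)
  then show ?thesis unfolding T_real_def dir_deriv_def Df_def[symmetric] by simp
qed

text \<open>In directions v orthogonal to all roots the difference terms drop out, so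
  t \<mapsto> f (p + t v) solves \<phi>' = i \<langle>\<lambda>, v\<rangle> \<phi>.\<close>
lemma f_translate_orthogonal:
  assumes orth: "\<And>l. l < CARD('n) div 2 \<Longrightarrow> v $ A l = v $ B l"
  shows "f (p + v) = exp (\<i> * real_pairing lam v) * f p"
proof -
  let ?c = "\<i> * real_pairing lam v"
  have Df_v: "Df y v = ?c * f y" for y
    using T_real_eigen[of y v] orth by simp
  define \<phi> where "\<phi> t = f (p + t *\<^sub>R v) * exp (- (?c * complex_of_real t))" for t
  have "(\<phi> has_derivative (\<lambda>h. 0)) (at t within UNIV)" for t
  proof -
    have "((\<lambda>t. f (p + t *\<^sub>R v)) has_derivative (\<lambda>h. Df (p + t *\<^sub>R v) (h *\<^sub>R v))) (at t)"
      by (rule has_derivative_compose[OF _ has_derivative_f]) (auto intro!: derivative_eq_intros)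
    then have d1: "((\<lambda>t. f (p + t *\<^sub>R v)) has_vector_derivative Df (p + t *\<^sub>R v) v) (at t)"
      unfolding has_vector_derivative_def using linear_simps(5)[OF bounded_linear_Df] by simp
    have "((\<lambda>z. exp (- (?c * z))) has_field_derivative (exp (- (?c * of_real t)) * (- ?c))) (at (of_real t))"
      by (auto intro!: derivative_eq_intros)
    from has_vector_derivative_real_field[OF this]
    have d2: "((\<lambda>t. exp (- (?c * complex_of_real t))) has_vector_derivative
                (exp (- (?c * of_real t)) * (- ?c))) (at t)" .
    have "(\<phi> has_vector_derivative (f (p + t *\<^sub>R v) * (exp (- (?c * of_real t)) * (- ?c)) +
          Df (p + t *\<^sub>R v) v * exp (- (?c * complex_of_real t)))) (at t)"
      unfolding \<phi>_def by (rule has_vector_derivative_mult[OF d1 d2])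
    then have "(\<phi> has_vector_derivative 0) (at t)" unfolding Df_v by (simp add: algebra_simps)
    then show ?thesis unfolding has_vector_derivative_def by simp
  qed
  then obtain c where "\<And>t. \<phi> t = c" using has_derivative_zero_constant[of UNIV \<phi>] by auto
  then have "\<phi> 1 = \<phi> 0" by simp
  then show ?thesis unfolding \<phi>_def by (simp add: exp_minus field_simps)
qed

lemma f_along_root:
  assumes k: "k < CARD('n) div 2" and p: "p $ A k = p $ B k"
  shows "f (p + (t / 2) *\<^sub>R root k) = f p * M1 (\<kappa> k) (pair_coeff k * complex_of_real t)"
proof -
  define y where "y t = p + (t / 2) *\<^sub>R root k" for t
  define q where "q t = f (y t)" for t
  have y_diff: "pair_diff (y t) k = t" for t
    using p root_A[OF k k] root_B[OF k k] unfolding y_def pair_diff_def by simp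
  have tau: "tau_pair (A k) (B k) (y t) = p" for t
    unfolding tau_pair_eq[OF k] y_diff by (simp add: y_def)
  have "q t = q 0 * M1 (\<kappa> k) (pair_coeff k * complex_of_real t)"
  proof (rule singular_ode_solution[OF kappa_pos[OF k]])
    have "isCont y 0" unfolding y_def by (intro continuous_intros) auto
    then show "isCont q 0" unfolding q_def by (rule isCont_o2) (rule isCont_f)
  next
    fix t :: real assume t: "t \<noteq> 0"
    have "(q has_derivative (\<lambda>h. Df (y t) (h *\<^sub>R ((1/2) *\<^sub>R root k)))) (at t)"
      unfolding q_def y_def
      by (rule has_derivative_compose[OF _ has_derivative_f])
         (auto intro!: derivative_eq_intros simp: scaleR_scaleR)
    then have dq: "(q has_vector_derivative (complex_of_real (1/2) * Df (y t) (root k))) (at t)"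
      unfolding has_vector_derivative_def using linear_simps(5)[OF bounded_linear_Df]
      by (simp add: scaleR_conv_of_real)
    have diff_terms: "(\<Sum>j<CARD('n) div 2. complex_of_real (\<kappa> j * (root k $ A j - root k $ B j))
          * diff_quot f (A j) (B j) (y t))
        = complex_of_real (\<kappa> k * 2) * ((q t - q 0) / complex_of_real t)"
    proof -
      have "y t $ A k \<noteq> y t $ B k" using y_diff[of t] t by (auto simp: pair_diff_def)
      then have "diff_quot f (A k) (B k) (y t) = (q t - q 0) / complex_of_real t"
        using y_diff[of t] unfolding diff_quot_def Let_def q_def tau
        by (simp add: pair_diff_def y_def)
      moreover have "(\<Sum>j<CARD('n) div 2. complex_of_real (\<kappa> j * (root k $ A j - root k $ B j))
          * diff_quot f (A j) (B j) (y t))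
        = (\<Sum>j<CARD('n) div 2.
             if j = k then complex_of_real (\<kappa> k * 2) * diff_quot f (A k) (B k) (y t) else 0)"
        by (intro sum.cong refl) (simp add: pair_diff_root[OF k, unfolded pair_diff_def])
      ultimately show ?thesis using k by simp
    qed
    have half_Df: "complex_of_real (1/2) * Df (y t) (root k)
        = pair_coeff k * q t - complex_of_real (\<kappa> k) * (q t - q 0) / complex_of_real t"
      using T_real_eigen[of "y t" "root k"]
      unfolding diff_terms real_pairing_root[OF k] pair_coeff_def q_def
      by (simp add: field_simps)
    from dq show "(q has_vector_derivative
        (pair_coeff k * q t - complex_of_real (\<kappa> k) * (q t - q 0) / complex_of_real t)) (at t)"
      unfolding half_Df .
  qed
  then show ?thesis by (simp add: q_def y_def)
qed

text \<open>pair_part x k has the pair differences of x in the first k pairs and vanishes elsewhere;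
  x - pair_part x (CARD('n) div 2) = h0 ix x.\<close>
definition pair_part :: "real ^ 'n \<Rightarrow> nat \<Rightarrow> real ^ 'n" where
  "pair_part x k = (\<Sum>j<k. (pair_diff x j / 2) *\<^sub>R root j)"

lemma f_pair_part_Suc:
  assumes k: "k < CARD('n) div 2"
  shows "f (pair_part x (Suc k))
       = f (pair_part x k) * M1 (\<kappa> k) (pair_coeff k * complex_of_real (pair_diff x k))"
proof -
  have "pair_part x k $ A k = 0" and "pair_part x k $ B k = 0"
    using k unfolding pair_part_def sum_root_A[OF less_imp_le[OF k] k] sum_root_B[OF less_imp_le[OF k] k]
    by simp_all
  then show ?thesis
    unfolding pair_part_def sum.lessThan_Suc by (intro f_along_root[OF k]) simp
qed

lemma f_pair_part:
  "k \<le> CARD('n) div 2 \<Longrightarrow>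
     f (pair_part x k) = (\<Prod>j<k. M1 (\<kappa> j) (pair_coeff j * complex_of_real (pair_diff x j)))"
proof (induction k)
  case 0
  then show ?case by (simp add: pair_part_def f_0)
next
  case (Suc k)
  then show ?case by (simp add: f_pair_part_Suc)
qed

lemma eigenfunction_eq_kernel: "f = kernel"
proof
  fix x
  have "f x = f (pair_part x (CARD('n) div 2) + h0 ix x)"
    by (simp add: h0_eq pair_part_def)
  also have "\<dots> = exp (phase x) * f (pair_part x (CARD('n) div 2))"
    unfolding phase_def by (rule f_translate_orthogonal) (rule h0_A_eq_B)
  also have "\<dots> = kernel x"
    unfolding kernel_def f_pair_part[OF le_refl] pair_factor_def pair_arg_def ..
  finally show "f x = kernel x" .
qed

end

theorem proposition6p1:
  fixes ix :: "nat \<Rightarrow> 'n::finite"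
    and \<kappa> :: "nat \<Rightarrow> real"
    and lam :: "complex ^ 'n"
  assumes "CARD('n) \<ge> 2"
    and "bij_betw ix {..<CARD('n)} UNIV"
    and "\<forall>j < CARD('n) div 2. \<kappa> j > 0"
  shows "real_analytic (M_kernel ix \<kappa> lam)
         \<and> (\<forall>\<zeta> x. T_op ix \<kappa> (M_kernel ix \<kappa> lam) \<zeta> x = \<i> * pairing lam \<zeta> * M_kernel ix \<kappa> lam x)
         \<and> M_kernel ix \<kappa> lam 0 = 1
         \<and> (\<forall>f. real_analytic f \<and> (\<forall>\<zeta> x. T_op ix \<kappa> f \<zeta> x = \<i> * pairing lam \<zeta> * f x) \<and> f 0 = 1
                \<longrightarrow> f = M_kernel ix \<kappa> lam)"
proof -
  interpret kernel_setup ix \<kappa> lam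
    using assms(2,3) by unfold_locales auto
  have unique: "f = kernel"
    if "real_analytic f" "\<forall>\<zeta> x. T_op ix \<kappa> f \<zeta> x = \<i> * pairing lam \<zeta> * f x" "f 0 = 1" for f
  proof -
    interpret kernel_eigenfunction ix \<kappa> lam f
      using that by unfold_locales auto
    show ?thesis by (rule eigenfunction_eq_kernel)
  qed
  show ?thesis
    unfolding M_kernel_eq_kernel
    using real_analytic_kernel T_op_kernel kernel_0 unique by blast
qed

end
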